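(* Let $n\ge1$, $U\in C^1(\overline{\mathbb R}^{n+1}_+,F)$ and $\Gamma\in C^1(\overline{\mathbb R}^{n+1}_+,\mathcal L(\mathbb R^{n+1},\mathfrak o(F)))$. Then for all $x,y,z\in\overline{\mathbb R}^{n+1}_+$, $$|U(x)-R^\Gamma(x,y)U(y)|\le|U(x)-R^\Gamma(x,z)U(z)|+|U(y)-R^\Gamma(y,z)U(z)|+|U(z)|\min\{2,\|\mathscr K_\Gamma\|_\infty|\Delta_{x,y,z}|\},$$ where $|\Delta_{x,y,z}|$ is the area of the triangle with vertices $x,y,z$.
   Context: $F$ finite-dimensional real Euclidean space, $\mathfrak o(F)$ its skew-symmetric endomorphisms, $\overline{\mathbb R}^{n+1}_+=\mathbb R^n\times[0,\infty)$. Parallel transport along a $C^1$ path: $P'(t)+\Gamma(\gamma(t))[\dot\gamma(t)]P(t)=0$, $P(1)=\mathrm{id}_F$; $R^\Gamma(x,y)=P^\Gamma_{\gamma_{x,y}}(0)$, $\gamma_{x,y}(t)=(1-t)x+ty$. Curvature $\mathscr K_\Gamma(x)[v,w]=D\Gamma(x)[v,w]-D\Gamma(x)[w,v]+\Gamma(x)[v]\Gamma(x)[w]-\Gamma(x)[w]\Gamma(x)[v]$, $D\Gamma(x)[v,w]=\frac{d}{dt}|_0\Gamma(x+tv)[w]$; $\|\mathscr K_\Gamma\|_\infty=\sup_x\sup_{v,w\ne0}|\mathscr K_\Gamma(x)[v,w]|/(|v||w|)$ (operator norm). *)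

theory Defs
  imports "HOL-Analysis.Analysis"
begin

text \<open>Closed upper half space of R^{n+1}, modelled as (real^'n) x real (last coordinate = snd).\<close>
definition half_space :: "((real^'n) \<times> real) set" where
  "half_space = {p. snd p \<ge> 0}"

definition skew :: "('f::euclidean_space \<Rightarrow>\<^sub>L 'f) \<Rightarrow> bool" where
  "skew A \<longleftrightarrow> (\<forall>a b. inner (A a) b = - inner a (A b))"

definition is_parallel_transport ::
  "('p::real_normed_vector \<Rightarrow> ('p \<Rightarrow>\<^sub>L ('f::euclidean_space \<Rightarrow>\<^sub>L 'f))) \<Rightarrow> 'p \<Rightarrow> 'p
    \<Rightarrow> (real \<Rightarrow> ('f \<Rightarrow>\<^sub>L 'f)) \<Rightarrow> bool" where
  "is_parallel_transport \<Gamma> x y P \<longleftrightarrow>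
     P 1 = id_blinfun \<and>
     (\<forall>t\<in>{0..1}. (P has_vector_derivative
        (- ((\<Gamma> ((1 - t) *\<^sub>R x + t *\<^sub>R y) (y - x)) o\<^sub>L P t))) (at t within {0..1}))"

definition transport ::
  "('p::real_normed_vector \<Rightarrow> ('p \<Rightarrow>\<^sub>L ('f::euclidean_space \<Rightarrow>\<^sub>L 'f))) \<Rightarrow> 'p \<Rightarrow> 'p \<Rightarrow> ('f \<Rightarrow>\<^sub>L 'f)" where
  "transport \<Gamma> x y = (THE A. \<exists>P. is_parallel_transport \<Gamma> x y P \<and> P 0 = A)"

text \<open>Curvature, with DG the derivative of Gamma: DG x v w = D Gamma(x)[v,w].\<close>
definition curvature ::
  "('p::real_normed_vector \<Rightarrow> ('p \<Rightarrow>\<^sub>L ('f::euclidean_space \<Rightarrow>\<^sub>L 'f)))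
   \<Rightarrow> ('p \<Rightarrow> ('p \<Rightarrow>\<^sub>L ('p \<Rightarrow>\<^sub>L ('f \<Rightarrow>\<^sub>L 'f)))) \<Rightarrow> 'p \<Rightarrow> 'p \<Rightarrow> 'p \<Rightarrow> ('f \<Rightarrow>\<^sub>L 'f)" where
  "curvature \<Gamma> DG x v w =
     DG x v w - DG x w v + (\<Gamma> x v o\<^sub>L \<Gamma> x w) - (\<Gamma> x w o\<^sub>L \<Gamma> x v)"

definition curvature_sup ::
  "('p::real_normed_vector \<Rightarrow> ('p \<Rightarrow>\<^sub>L ('f::euclidean_space \<Rightarrow>\<^sub>L 'f)))
   \<Rightarrow> ('p \<Rightarrow> ('p \<Rightarrow>\<^sub>L ('p \<Rightarrow>\<^sub>L ('f \<Rightarrow>\<^sub>L 'f)))) \<Rightarrow> 'p set \<Rightarrow> ereal" where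
  "curvature_sup \<Gamma> DG S =
     (SUP x\<in>S. SUP vw\<in>{(v, w). v \<noteq> 0 \<and> w \<noteq> 0}.
        ereal (norm (curvature \<Gamma> DG x (fst vw) (snd vw)) / (norm (fst vw) * norm (snd vw))))"

definition triangle_area :: "'p::real_inner \<Rightarrow> 'p \<Rightarrow> 'p \<Rightarrow> real" where
  "triangle_area x y z =
     (let a = y - x; b = z - x in sqrt ((norm a)\<^sup>2 * (norm b)\<^sup>2 - (inner a b)\<^sup>2) / 2)"

end

theory Submission
  imports Defs
begin

text \<open>Writing \<open>T p q\<close> for the transport along the segment from \<open>p\<close> to \<open>q\<close>, the triangle
  inequality reduces the claim to a bound on the holonomy defect \<open>T x z - T x y o T y z\<close>.
  Since \<open>\<Gamma>\<close> is skew, transports are isometries, which gives the bound \<open>2\<close>. For the curvature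
  bound, sweep the triangle by the segments from \<open>x\<close> to \<open>e s = y + s (z - y)\<close> and differentiate
  \<open>\<Theta> s = T x (e s)\<close> in \<open>s\<close> by Duhamel's formula; an integration by parts along the segment gives
  \<open>\<Theta>' = \<Theta> o (\<Gamma>(e s)[z - y] + C s)\<close>, where \<open>C s\<close> is the integral of the conjugated curvature
  \<open>K[t (z - y), e s - x]\<close> over the \<open>s\<close>-th segment. Hence \<open>M s = \<Theta> s o T (e s) z\<close> satisfies
  \<open>M' = \<Theta> o C o T\<close>, and the defect \<open>M 1 - M 0\<close> is bounded by \<open>sup |C| \<le> |K|\<^sub>\<infinity> |\<Delta>|\<close>, because
  \<open>|K[v, w]|\<close> is at most \<open>|K|\<^sub>\<infinity>\<close> times the area of the parallelogram spanned by \<open>v\<close> and \<open>w\<close>.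
  The transports themselves are constructed by Picard iteration.\<close>

primrec picard_term :: "(real \<Rightarrow> ('e::banach \<Rightarrow>\<^sub>L 'e)) \<Rightarrow> 'e \<Rightarrow> nat \<Rightarrow> real \<Rightarrow> 'e" where
  "picard_term L v 0 = (\<lambda>t. v)"
| "picard_term L v (Suc n) = (\<lambda>t. integral {0..t} (\<lambda>s. L s (picard_term L v n s)))"

lemma has_integral_power_0:
  assumes "0 \<le> t"
  shows "((\<lambda>s::real. s ^ n) has_integral (t ^ Suc n / Suc n)) {0..t}"
proof -
  have "((\<lambda>s. s ^ Suc n / Suc n) has_vector_derivative s ^ n) (at s within {0..t})" for s :: real
    unfolding has_real_derivative_iff_has_vector_derivative[symmetric]
    using DERIV_cdivide[OF has_field_derivative_at_within[OF DERIV_pow[of "Suc n" s]], of "Suc n" "{0..t}"]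
    by (simp del: of_nat_Suc)
  from fundamental_theorem_of_calculus[OF assms this] show ?thesis by simp
qed

lemma picard_term_continuous:
  fixes L :: "real \<Rightarrow> ('e::banach \<Rightarrow>\<^sub>L 'e)"
  assumes L: "continuous_on {0..1} L"
  shows "continuous_on {0..1} (picard_term L v n)"
proof (induction n)
  case (Suc n)
  have "continuous_on {0..1} (\<lambda>s. L s (picard_term L v n s))"
    using Suc L by (intro continuous_intros)
  then show ?case
    unfolding picard_term.simps by (rule indefinite_integral_continuous_1[OF integrable_continuous_real])
qed (simp add: continuous_on_const)

lemma integrable_blinfun_apply_Icc:
  fixes L :: "real \<Rightarrow> ('e::real_normed_vector \<Rightarrow>\<^sub>L 'f::banach)"
  assumes "continuous_on {0..1} L" "continuous_on {0..1} X" "t \<in> {0..1}"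
  shows "(\<lambda>s. L s (X s)) integrable_on {0..t}"
proof -
  have "continuous_on {0..1} (\<lambda>s. L s (X s))" using assms(1,2) by (intro continuous_intros)
  then show ?thesis
    by (rule integrable_continuous_real[OF continuous_on_subset]) (use assms(3) in auto)
qed

lemma picard_term_bound:
  fixes L :: "real \<Rightarrow> ('e::banach \<Rightarrow>\<^sub>L 'e)"
  assumes L: "continuous_on {0..1} L" and c: "\<And>t. t \<in> {0..1} \<Longrightarrow> norm (L t) \<le> c" and c0: "0 \<le> c"
    and t: "t \<in> {0..1}"
  shows "norm (picard_term L v n t) \<le> norm v * c ^ n * t ^ n / fact n"
  using t
proof (induction n arbitrary: t)
  case (Suc n)
  define K where "K = c * (norm v * c ^ n / fact n)"
  have power: "((\<lambda>s. K * s ^ n) has_integral K * (t ^ Suc n / Suc n)) {0..t}"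
    using has_integral_power_0[of t n] Suc.prems by (intro has_integral_mult_right) auto
  have "norm (picard_term L v (Suc n) t) \<le> integral {0..t} (\<lambda>s. K * s ^ n)"
    unfolding picard_term.simps
  proof (rule integral_norm_bound_integral)
    show "(\<lambda>s. L s (picard_term L v n s)) integrable_on {0..t}"
      by (rule integrable_blinfun_apply_Icc[OF L picard_term_continuous[OF L] Suc.prems])
    show "(\<lambda>s. K * s ^ n) integrable_on {0..t}" using power by blast
    fix s assume "s \<in> {0..t}"
    then have s: "s \<in> {0..1}" using Suc.prems by auto
    have "norm (L s (picard_term L v n s)) \<le> norm (L s) * norm (picard_term L v n s)"
      by (rule norm_blinfun)
    also have "\<dots> \<le> c * (norm v * c ^ n * s ^ n / fact n)"
      using Suc.IH[OF s] c[OF s] c0 by (intro mult_mono) auto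
    finally show "norm (L s (picard_term L v n s)) \<le> K * s ^ n" by (simp add: K_def)
  qed
  also have "\<dots> = norm v * c ^ Suc n * t ^ Suc n / fact (Suc n)"
    using integral_unique[OF power] by (simp add: K_def field_simps del: of_nat_Suc)
  finally show ?case .
qed simp

lemma picard_partial_sum_Suc:
  fixes L :: "real \<Rightarrow> ('e::banach \<Rightarrow>\<^sub>L 'e)"
  assumes L: "continuous_on {0..1} L" and t: "t \<in> {0..1}"
  shows "(\<Sum>i<Suc N. picard_term L v i t) = v + integral {0..t} (\<lambda>s. L s (\<Sum>i<N. picard_term L v i s))"
proof (induction N)
  case (Suc N)
  have sum: "continuous_on {0..1} (\<lambda>s. \<Sum>i<N. picard_term L v i s)"
    using picard_term_continuous[OF L] by (intro continuous_on_sum) auto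
  have "(\<Sum>i<Suc (Suc N). picard_term L v i t)
      = v + (integral {0..t} (\<lambda>s. L s (\<Sum>i<N. picard_term L v i s))
        + integral {0..t} (\<lambda>s. L s (picard_term L v N s)))"
    using Suc by (simp add: add.assoc)
  also have "\<dots> = v + integral {0..t} (\<lambda>s. L s (\<Sum>i<N. picard_term L v i s) + L s (picard_term L v N s))"
    using integrable_blinfun_apply_Icc[OF L sum t] integrable_blinfun_apply_Icc[OF L picard_term_continuous[OF L] t]
    by (simp add: integral_add)
  also have "(\<lambda>s. L s (\<Sum>i<N. picard_term L v i s) + L s (picard_term L v N s))
      = (\<lambda>s. L s (\<Sum>i<Suc N. picard_term L v i s))"
    by (simp add: blinfun.add_right)
  finally show ?case .
qed simp

lemma volterra_equation_uniform_limit: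
  fixes L :: "real \<Rightarrow> ('e::banach \<Rightarrow>\<^sub>L 'e)"
  assumes L: "continuous_on {0..1} L"
    and lim: "uniform_limit {0..1} Z X sequentially"
    and Z: "\<And>N. continuous_on {0..1} (Z N)"
    and Z_rec: "\<And>N t. t \<in> {0..1} \<Longrightarrow> Z (Suc N) t = v + integral {0..t} (\<lambda>s. L s (Z N s))"
    and t: "t \<in> {0..1}"
  shows "X t = v + integral {0..t} (\<lambda>s. L s (X s))"
proof -
  have sub: "{0..t} \<subseteq> {0..1}" using t by auto
  have X: "continuous_on {0..1} X"
    by (rule uniform_limit_theorem[OF _ lim]) (auto simp: Z)
  have "uniform_limit {0..t} (\<lambda>N s. L s (Z N s)) (\<lambda>s. L s (X s)) sequentially"
    by (intro bounded_bilinear.bounded_uniform_limit[OF bounded_bilinear_blinfun_apply]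
        uniform_limit_const uniform_limit_on_subset[OF lim sub] compact_imp_bounded
        compact_continuous_image continuous_on_subset[OF X sub] continuous_on_subset[OF L sub])
      auto
  then obtain I J where I: "\<And>N. ((\<lambda>s. L s (Z N s)) has_integral I N) {0..t}"
    and J: "((\<lambda>s. L s (X s)) has_integral J) {0..t}" and IJ: "I \<longlonglongrightarrow> J"
    by (rule uniform_limit_integral) (auto intro!: continuous_intros continuous_on_subset[OF _ sub] L Z)
  have "(\<lambda>N. Z (Suc N) t) \<longlonglongrightarrow> X t"
    using lim t unfolding uniform_limit_iff
    by (intro LIMSEQ_Suc) (auto simp: tendsto_iff elim!: eventually_mono)
  moreover have "(\<lambda>N. Z (Suc N) t) = (\<lambda>N. v + I N)"
    using Z_rec[OF t] I by (auto simp: integral_unique)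
  then have "(\<lambda>N. Z (Suc N) t) \<longlonglongrightarrow> v + J"
    using IJ by (auto intro: tendsto_add)
  ultimately have "X t = v + J" by (rule LIMSEQ_unique)
  then show ?thesis using J by (simp add: integral_unique)
qed

text \<open>The Picard series converges uniformly by comparison with the exponential series.\<close>

lemma linear_volterra_solution_exists:
  fixes L :: "real \<Rightarrow> ('e::banach \<Rightarrow>\<^sub>L 'e)"
  assumes L: "continuous_on {0..1} L"
  obtains X where "continuous_on {0..1} X"
    "\<And>t. t \<in> {0..1} \<Longrightarrow> X t = v + integral {0..t} (\<lambda>s. L s (X s))"
proof -
  obtain c where "c > 0" and c: "\<And>t. t \<in> {0..1} \<Longrightarrow> norm (L t) \<le> c"
    using compact_imp_bounded[OF compact_continuous_image[OF L compact_Icc]]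
    by (auto simp: bounded_pos)
  define M where "M n = norm v * (inverse (fact n) * c ^ n)" for n
  have "norm (picard_term L v n t) \<le> M n" if "t \<in> {0..1}" for n t
  proof -
    have "norm (picard_term L v n t) \<le> norm v * c ^ n * t ^ n / fact n"
      using picard_term_bound[OF L c] \<open>c > 0\<close> that by simp
    also have "\<dots> \<le> norm v * c ^ n * 1 / fact n"
      using that \<open>c > 0\<close> by (intro divide_right_mono mult_left_mono power_le_one) auto
    finally show ?thesis by (simp add: M_def field_simps)
  qed
  moreover have "summable M" unfolding M_def by (intro summable_mult summable_exp)
  ultimately have lim: "uniform_limit {0..1} (\<lambda>N t. \<Sum>i<N. picard_term L v i t)
      (\<lambda>t. \<Sum>i. picard_term L v i t) sequentially"
    by (intro Weierstrass_m_test) auto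
  have sums: "continuous_on {0..1} (\<lambda>t. \<Sum>i<N. picard_term L v i t)" for N
    using picard_term_continuous[OF L] by (intro continuous_on_sum) auto
  show ?thesis
    using that[OF uniform_limit_theorem[OF _ lim]]
      volterra_equation_uniform_limit[OF L lim sums picard_partial_sum_Suc[OF L]]
    by (auto simp: sums)
qed

lemma linear_ode_solution_exists:
  fixes L :: "real \<Rightarrow> ('e::banach \<Rightarrow>\<^sub>L 'e)"
  assumes L: "continuous_on {0..1} L"
  obtains X where "X 0 = v"
    "\<And>t. t \<in> {0..1} \<Longrightarrow> (X has_vector_derivative L t (X t)) (at t within {0..1})"
proof -
  obtain X where X: "continuous_on {0..1} X"
    and eq: "\<And>t. t \<in> {0..1} \<Longrightarrow> X t = v + integral {0..t} (\<lambda>s. L s (X s))"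
    using linear_volterra_solution_exists[OF L, where v=v] by blast
  have LX: "continuous_on {0..1} (\<lambda>s. L s (X s))" using L X by (intro continuous_intros)
  have "(X has_vector_derivative L t (X t)) (at t within {0..1})" if t: "t \<in> {0..1}" for t
  proof (rule has_vector_derivative_transform[OF t eq])
    show "((\<lambda>s. v + integral {0..s} (\<lambda>s. L s (X s))) has_vector_derivative L t (X t))
        (at t within {0..1})"
      using integral_has_vector_derivative[OF LX t]
      by (auto intro!: derivative_eq_intros)
  qed
  with eq[of 0] show ?thesis using that by simp
qed

lemma linear_ode_solution_exists_terminal:
  fixes L :: "real \<Rightarrow> ('e::banach \<Rightarrow>\<^sub>L 'e)"
  assumes L: "continuous_on {0..1} L"
  obtains X where "X 1 = v"
    "\<And>t. t \<in> {0..1} \<Longrightarrow> (X has_vector_derivative L t (X t)) (at t within {0..1})"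
proof -
  have "continuous_on {0..1} (\<lambda>s. - L (1 - s))"
    by (intro continuous_intros continuous_on_compose2[OF L]) auto
  then obtain Y where Y0: "Y 0 = v"
    and Y: "\<And>s. s \<in> {0..1} \<Longrightarrow> (Y has_vector_derivative (- L (1 - s)) (Y s)) (at s within {0..1})"
    using linear_ode_solution_exists[where v=v] by blast
  have reflect: "(\<lambda>t::real. 1 - t) ` {0..1} = {0..1}"
    by (auto simp: image_iff intro!: bexI[where x="1 - _"])
  have "((\<lambda>t. Y (1 - t)) has_vector_derivative L t (Y (1 - t))) (at t within {0..1})"
    if t: "t \<in> {0..1}" for t
  proof -
    have "((\<lambda>t. 1 - t) has_vector_derivative (-1::real)) (at t within {0..1})"
      by (auto intro!: derivative_eq_intros)
    moreover have "(Y has_vector_derivative (- L (1 - (1 - t))) (Y (1 - t)))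
        (at (1 - t) within (\<lambda>t. 1 - t) ` {0..1})"
      unfolding reflect using Y[of "1 - t"] t by auto
    ultimately have "((Y \<circ> (\<lambda>t. 1 - t)) has_vector_derivative
        ((-1) *\<^sub>R (- L (1 - (1 - t))) (Y (1 - t)))) (at t within {0..1})"
      by (rule vector_diff_chain_within)
    then show ?thesis by (simp add: o_def blinfun.minus_left)
  qed
  then show ?thesis using that[of "\<lambda>t. Y (1 - t)"] Y0 by simp
qed

definition compose_blinfun_left ::
    "('b::real_normed_vector \<Rightarrow>\<^sub>L 'c::real_normed_vector)
      \<Rightarrow> (('a::real_normed_vector \<Rightarrow>\<^sub>L 'b) \<Rightarrow>\<^sub>L ('a \<Rightarrow>\<^sub>L 'c))" where
  "compose_blinfun_left A = bounded_bilinear.prod_right (o\<^sub>L) A"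

definition compose_blinfun_right ::
    "('a::real_normed_vector \<Rightarrow>\<^sub>L 'b::real_normed_vector)
      \<Rightarrow> (('b \<Rightarrow>\<^sub>L 'c::real_normed_vector) \<Rightarrow>\<^sub>L ('a \<Rightarrow>\<^sub>L 'c))" where
  "compose_blinfun_right A = bounded_bilinear.prod_left (o\<^sub>L) A"

lemma compose_blinfun_left_apply [simp]: "compose_blinfun_left A X = A o\<^sub>L X"
  unfolding compose_blinfun_left_def
  by (subst bounded_bilinear.prod_right.rep_eq[OF bounded_bilinear_blinfun_compose]) (rule refl)

lemma compose_blinfun_right_apply [simp]: "compose_blinfun_right A X = X o\<^sub>L A"
  unfolding compose_blinfun_right_def
  by (subst bounded_bilinear.prod_left.rep_eq[OF bounded_bilinear_blinfun_compose]) (rule refl)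

lemma continuous_on_compose_blinfun_left:
  "continuous_on S A \<Longrightarrow> continuous_on S (\<lambda>t. compose_blinfun_left (A t))"
  unfolding compose_blinfun_left_def
  by (rule bounded_linear.continuous_on[OF bounded_bilinear.bounded_linear_prod_right[OF
        bounded_bilinear_blinfun_compose]])

lemma continuous_on_compose_blinfun_right:
  "continuous_on S A \<Longrightarrow> continuous_on S (\<lambda>t. compose_blinfun_right (A t))"
  unfolding compose_blinfun_right_def
  by (rule bounded_linear.continuous_on[OF bounded_bilinear.bounded_linear_prod_left[OF
        bounded_bilinear_blinfun_compose]])

lemmas has_vector_derivative_blinfun_apply =
  bounded_bilinear.has_vector_derivative[OF bounded_bilinear_blinfun_apply]
lemmas has_vector_derivative_blinfun_compose =
  bounded_bilinear.has_vector_derivative[OF bounded_bilinear_blinfun_compose]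

lemma blinfun_compose_assoc: "(A o\<^sub>L B) o\<^sub>L C = A o\<^sub>L (B o\<^sub>L C)"
  by (rule blinfun_eqI) simp

lemma norm_blinfun_le_1_if_isometry:
  "(\<And>v. norm (blinfun_apply A v) = norm v) \<Longrightarrow> norm A \<le> 1"
  by (rule norm_blinfun_bound) auto

lemma has_integral_Icc_norm_le:
  fixes f :: "real \<Rightarrow> 'b::real_normed_vector"
  assumes "0 \<le> B" "(f has_integral i) {a..b}" "\<And>x. x \<in> {a..b} \<Longrightarrow> norm (f x) \<le> B" "a \<le> b"
  shows "norm i \<le> B * (b - a)"
  using has_integral_bound_real[of B "{}" f i a b] assms by auto

definition transport_solution :: "(real \<Rightarrow> ('f::real_normed_vector \<Rightarrow>\<^sub>L 'f)) \<Rightarrow> (real \<Rightarrow> ('f \<Rightarrow>\<^sub>L 'f)) \<Rightarrow> bool"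
  where "transport_solution A P \<longleftrightarrow> P 1 = id_blinfun \<and>
    (\<forall>t\<in>{0..1}. (P has_vector_derivative - (A t o\<^sub>L P t)) (at t within {0..1}))"

definition inverse_transport_solution ::
    "(real \<Rightarrow> ('f::real_normed_vector \<Rightarrow>\<^sub>L 'f)) \<Rightarrow> (real \<Rightarrow> ('f \<Rightarrow>\<^sub>L 'f)) \<Rightarrow> bool"
  where "inverse_transport_solution A S \<longleftrightarrow> S 1 = id_blinfun \<and>
    (\<forall>t\<in>{0..1}. (S has_vector_derivative (S t o\<^sub>L A t)) (at t within {0..1}))"

lemma transport_solutionD:
  assumes "transport_solution A P"
  shows "P 1 = id_blinfun"
    "t \<in> {0..1} \<Longrightarrow> (P has_vector_derivative - (A t o\<^sub>L P t)) (at t within {0..1})"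
  using assms unfolding transport_solution_def by auto

lemma inverse_transport_solutionD:
  assumes "inverse_transport_solution A S"
  shows "S 1 = id_blinfun"
    "t \<in> {0..1} \<Longrightarrow> (S has_vector_derivative (S t o\<^sub>L A t)) (at t within {0..1})"
  using assms unfolding inverse_transport_solution_def by auto

lemma transport_solution_exists:
  fixes A :: "real \<Rightarrow> ('f::banach \<Rightarrow>\<^sub>L 'f)"
  assumes "continuous_on {0..1} A"
  obtains P where "transport_solution A P"
proof -
  have cont: "continuous_on {0..1} (\<lambda>t. compose_blinfun_left (- A t))"
    using assms by (intro continuous_on_compose_blinfun_left continuous_intros)
  obtain P where "P 1 = id_blinfun" and
    "\<And>t. t \<in> {0..1} \<Longrightarrow> (P has_vector_derivative compose_blinfun_left (- A t) (P t)) (at t within {0..1})"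
    using linear_ode_solution_exists_terminal[OF cont, where v=id_blinfun] by blast
  then have "transport_solution A P"
    unfolding transport_solution_def
    by (simp add: bounded_bilinear.minus_left[OF bounded_bilinear_blinfun_compose])
  then show ?thesis by (rule that)
qed

lemma inverse_transport_solution_exists:
  fixes A :: "real \<Rightarrow> ('f::banach \<Rightarrow>\<^sub>L 'f)"
  assumes "continuous_on {0..1} A"
  obtains S where "inverse_transport_solution A S"
proof -
  have cont: "continuous_on {0..1} (\<lambda>t. compose_blinfun_right (A t))"
    using assms by (rule continuous_on_compose_blinfun_right)
  obtain S where "S 1 = id_blinfun" and
    "\<And>t. t \<in> {0..1} \<Longrightarrow> (S has_vector_derivative compose_blinfun_right (A t) (S t)) (at t within {0..1})"
    using linear_ode_solution_exists_terminal[OF cont, where v=id_blinfun] by blast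
  then have "inverse_transport_solution A S"
    unfolding inverse_transport_solution_def by simp
  then show ?thesis by (rule that)
qed

lemma transport_solution_continuous: "transport_solution A P \<Longrightarrow> continuous_on {0..1} P"
  unfolding transport_solution_def continuous_on_eq_continuous_within
  using has_vector_derivative_continuous by blast

lemma inverse_transport_solution_continuous:
  "inverse_transport_solution A S \<Longrightarrow> continuous_on {0..1} S"
  unfolding inverse_transport_solution_def continuous_on_eq_continuous_within
  using has_vector_derivative_continuous by blast

lemma skew_flow_inner_const:
  fixes A X :: "real \<Rightarrow> ('f::euclidean_space \<Rightarrow>\<^sub>L 'f)"
  assumes skew: "\<forall>t\<in>{0..1}. skew (A t)"
    and X: "\<And>t. t \<in> {0..1} \<Longrightarrow> (X has_vector_derivative - (A t o\<^sub>L X t)) (at t within {0..1})"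
    and t: "t \<in> {0..1}" and s: "s \<in> {0..1}"
  shows "inner (X t v) (X t w) = inner (X s v) (X s w)"
proof (rule has_derivative_zero_unique[OF convex_real_interval(5) _ t s])
  fix r :: real assume r: "r \<in> {0..1}"
  have "((\<lambda>r. X r u) has_vector_derivative - A r (X r u)) (at r within {0..1})" for u
    using has_vector_derivative_blinfun_apply[OF X[OF r], of "\<lambda>_. u" 0] by (simp add: blinfun.minus_left)
  then have "((\<lambda>r. inner (X r v) (X r w)) has_vector_derivative
      (inner (X r v) (- A r (X r w)) + inner (- A r (X r v)) (X r w))) (at r within {0..1})"
    by (intro bounded_bilinear.has_vector_derivative[OF bounded_bilinear_inner])
  moreover have "inner (X r v) (- A r (X r w)) + inner (- A r (X r v)) (X r w) = 0"
    using bspec[OF skew r] unfolding skew_def by simp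
  ultimately show "((\<lambda>r. inner (X r v) (X r w)) has_derivative (\<lambda>h. 0)) (at r within {0..1})"
    by (simp add: has_vector_derivative_def)
qed

lemma transport_solution_isometry:
  fixes A P :: "real \<Rightarrow> ('f::euclidean_space \<Rightarrow>\<^sub>L 'f)"
  assumes "\<forall>t\<in>{0..1}. skew (A t)" "transport_solution A P" "t \<in> {0..1}"
  shows "norm (P t v) = norm v"
proof -
  have "inner (P t v) (P t v) = inner (P 1 v) (P 1 v)"
    by (rule skew_flow_inner_const[OF assms(1) transport_solutionD(2)[OF assms(2)] assms(3)]) auto
  then show ?thesis using transport_solutionD(1)[OF assms(2)] by (simp add: norm_eq_sqrt_inner)
qed

lemma transport_solution_norm_le:
  fixes A P :: "real \<Rightarrow> ('f::euclidean_space \<Rightarrow>\<^sub>L 'f)"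
  assumes "\<forall>t\<in>{0..1}. skew (A t)" "transport_solution A P" "t \<in> {0..1}"
  shows "norm (P t) \<le> 1"
  using transport_solution_isometry[OF assms] by (rule norm_blinfun_le_1_if_isometry)

lemma transport_solution_unique:
  fixes A P Q :: "real \<Rightarrow> ('f::euclidean_space \<Rightarrow>\<^sub>L 'f)"
  assumes skew: "\<forall>t\<in>{0..1}. skew (A t)"
    and P: "transport_solution A P" and Q: "transport_solution A Q" and t: "t \<in> {0..1}"
  shows "P t = Q t"
proof (rule blinfun_eqI)
  fix v
  have diff: "((\<lambda>t. P t - Q t) has_vector_derivative - (A t o\<^sub>L (P t - Q t))) (at t within {0..1})"
    if "t \<in> {0..1}" for t
    using has_vector_derivative_diff[OF transport_solutionD(2)[OF P that] transport_solutionD(2)[OF Q that]]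
    by (simp add: bounded_bilinear.diff_right[OF bounded_bilinear_blinfun_compose])
  have "inner ((P t - Q t) v) ((P t - Q t) v) = inner ((P 1 - Q 1) v) ((P 1 - Q 1) v)"
    by (rule skew_flow_inner_const[OF skew diff t]) auto
  then show "P t v = Q t v"
    using transport_solutionD(1)[OF P] transport_solutionD(1)[OF Q] by (simp add: blinfun.diff_left)
qed

lemma inverse_transport_solution_inverse:
  fixes A P S :: "real \<Rightarrow> ('f::euclidean_space \<Rightarrow>\<^sub>L 'f)"
  assumes skew: "\<forall>t\<in>{0..1}. skew (A t)"
    and P: "transport_solution A P" and S: "inverse_transport_solution A S" and t: "t \<in> {0..1}"
  shows "S t o\<^sub>L P t = id_blinfun" "P t o\<^sub>L S t = id_blinfun"
proof -
  have "S t o\<^sub>L P t = S 1 o\<^sub>L P 1"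
  proof (rule has_derivative_zero_unique[OF convex_real_interval(5) _ t])
    fix r :: real assume r: "r \<in> {0..1}"
    have "((\<lambda>r. S r o\<^sub>L P r) has_vector_derivative
        ((S r o\<^sub>L - (A r o\<^sub>L P r)) + ((S r o\<^sub>L A r) o\<^sub>L P r))) (at r within {0..1})"
      by (rule has_vector_derivative_blinfun_compose[OF inverse_transport_solutionD(2)[OF S r]
            transport_solutionD(2)[OF P r]])
    moreover have "(S r o\<^sub>L - (A r o\<^sub>L P r)) + ((S r o\<^sub>L A r) o\<^sub>L P r) = 0"
      by (simp add: bounded_bilinear.minus_right[OF bounded_bilinear_blinfun_compose]
          blinfun_compose_assoc)
    ultimately show "((\<lambda>r. S r o\<^sub>L P r) has_derivative (\<lambda>h. 0)) (at r within {0..1})"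
      by (simp add: has_vector_derivative_def)
  qed auto
  then show SP: "S t o\<^sub>L P t = id_blinfun"
    using transport_solutionD(1)[OF P] inverse_transport_solutionD(1)[OF S]
    by (auto intro: blinfun_eqI)
  have "inj (P t)"
  proof (rule injI)
    fix a b assume "P t a = P t b"
    then have "norm (P t (a - b)) = 0" by (simp add: blinfun.diff_right)
    then show "a = b" using transport_solution_isometry[OF skew P t, of "a - b"] by simp
  qed
  then have "surj (P t)"
    using blinfun.bounded_linear_right bounded_linear_def linear_inj_imp_surj by blast
  show "P t o\<^sub>L S t = id_blinfun"
  proof (rule blinfun_eqI)
    fix u
    obtain v where "u = P t v" using \<open>surj (P t)\<close> by blast
    then show "(P t o\<^sub>L S t) u = id_blinfun u"
      using SP by (metis blinfun_apply_blinfun_compose id_blinfun.rep_eq id_apply)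
  qed
qed

lemma inverse_transport_solution_norm_le:
  fixes A P S :: "real \<Rightarrow> ('f::euclidean_space \<Rightarrow>\<^sub>L 'f)"
  assumes skew: "\<forall>t\<in>{0..1}. skew (A t)"
    and P: "transport_solution A P" and S: "inverse_transport_solution A S" and t: "t \<in> {0..1}"
  shows "norm (S t) \<le> 1"
proof (rule norm_blinfun_le_1_if_isometry)
  fix w
  have "norm (S t w) = norm (P t (S t w))" using transport_solution_isometry[OF skew P t] by simp
  also have "\<dots> = norm w"
    using inverse_transport_solution_inverse(2)[OF skew P S t]
    by (metis blinfun_apply_blinfun_compose id_blinfun.rep_eq id_apply)
  finally show "norm (S t w) = norm w" .
qed

text \<open>Duhamel's formula: the derivative of \<open>S s o\<^sub>L Q s\<close> is \<open>- S s o\<^sub>L (B s - A s) o\<^sub>L Q s\<close>.\<close>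

lemma duhamel_formula:
  fixes A B P Q S :: "real \<Rightarrow> ('f::euclidean_space \<Rightarrow>\<^sub>L 'f)"
  assumes skew: "\<forall>t\<in>{0..1}. skew (A t)"
    and P: "transport_solution A P" and Q: "transport_solution B Q"
    and S: "inverse_transport_solution A S" and t: "t \<in> {0..1}"
  shows "((\<lambda>s. S s o\<^sub>L ((B s - A s) o\<^sub>L Q s)) has_integral ((S t o\<^sub>L Q t) - id_blinfun)) {t..1}"
    and "Q t - P t = P t o\<^sub>L ((S t o\<^sub>L Q t) - id_blinfun)"
proof -
  have sub: "{t..1} \<subseteq> {0..1}" using t by auto
  have deriv: "((\<lambda>s. S s o\<^sub>L Q s) has_vector_derivative - (S s o\<^sub>L ((B s - A s) o\<^sub>L Q s)))
      (at s within {t..1})" if s: "s \<in> {t..1}" for s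
  proof -
    have s1: "s \<in> {0..1}" using s sub by auto
    have "((\<lambda>s. S s o\<^sub>L Q s) has_vector_derivative
        ((S s o\<^sub>L - (B s o\<^sub>L Q s)) + ((S s o\<^sub>L A s) o\<^sub>L Q s))) (at s within {0..1})"
      by (rule has_vector_derivative_blinfun_compose[OF inverse_transport_solutionD(2)[OF S s1]
            transport_solutionD(2)[OF Q s1]])
    moreover have "(S s o\<^sub>L - (B s o\<^sub>L Q s)) + ((S s o\<^sub>L A s) o\<^sub>L Q s)
        = - (S s o\<^sub>L ((B s - A s) o\<^sub>L Q s))"
      by (rule blinfun_eqI) (simp add: blinfun.bilinear_simps)
    ultimately show ?thesis using has_vector_derivative_within_subset[OF _ sub] by metis
  qed
  have "((\<lambda>s. - (S s o\<^sub>L ((B s - A s) o\<^sub>L Q s))) has_integral ((S 1 o\<^sub>L Q 1) - (S t o\<^sub>L Q t))) {t..1}"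
    using fundamental_theorem_of_calculus[of t 1, OF _ deriv] t by auto
  moreover have "S 1 o\<^sub>L Q 1 = id_blinfun"
    using inverse_transport_solutionD(1)[OF S] transport_solutionD(1)[OF Q] by (intro blinfun_eqI) simp
  ultimately show "((\<lambda>s. S s o\<^sub>L ((B s - A s) o\<^sub>L Q s)) has_integral ((S t o\<^sub>L Q t) - id_blinfun)) {t..1}"
    using has_integral_neg_iff[of "\<lambda>s. S s o\<^sub>L ((B s - A s) o\<^sub>L Q s)"] by simp
  have PS: "P t o\<^sub>L S t = id_blinfun" by (rule inverse_transport_solution_inverse(2)[OF skew P S t])
  show "Q t - P t = P t o\<^sub>L ((S t o\<^sub>L Q t) - id_blinfun)"
  proof (rule blinfun_eqI)
    fix v
    have "P t (S t (Q t v)) = Q t v" using PS by (metis blinfun_apply_blinfun_compose id_blinfun.rep_eq id_apply)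
    then show "(Q t - P t) v = (P t o\<^sub>L ((S t o\<^sub>L Q t) - id_blinfun)) v"
      by (simp add: blinfun.bilinear_simps)
  qed
qed

lemma norm_blinfun_compose_le_left:
  fixes A :: "'b::real_normed_vector \<Rightarrow>\<^sub>L 'c::real_normed_vector" and B :: "'a::real_normed_vector \<Rightarrow>\<^sub>L 'b"
  assumes "norm A \<le> 1"
  shows "norm (A o\<^sub>L B) \<le> norm B"
  using norm_blinfun_compose[of A B] mult_right_mono[OF assms norm_ge_zero[of B]] by simp

lemma norm_blinfun_compose_le_right:
  fixes A :: "'b::real_normed_vector \<Rightarrow>\<^sub>L 'c::real_normed_vector" and B :: "'a::real_normed_vector \<Rightarrow>\<^sub>L 'b"
  assumes "norm B \<le> 1"
  shows "norm (A o\<^sub>L B) \<le> norm A"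
  using norm_blinfun_compose[of A B] mult_left_mono[OF assms norm_ge_zero[of A]] by simp

lemma transport_solution_dist_le:
  fixes A B P Q S :: "real \<Rightarrow> ('f::euclidean_space \<Rightarrow>\<^sub>L 'f)"
  assumes skewA: "\<forall>t\<in>{0..1}. skew (A t)" and skewB: "\<forall>t\<in>{0..1}. skew (B t)"
    and P: "transport_solution A P" and Q: "transport_solution B Q"
    and S: "inverse_transport_solution A S" and t: "t \<in> {0..1}"
    and close: "\<And>s. s \<in> {0..1} \<Longrightarrow> norm (B s - A s) \<le> e"
  shows "norm (Q t - P t) \<le> e"
proof -
  have e: "0 \<le> e" using order_trans[OF norm_ge_zero close[of 1]] by simp
  have "norm ((S t o\<^sub>L Q t) - id_blinfun) \<le> e * (1 - t)"
  proof (rule has_integral_Icc_norm_le[OF e duhamel_formula(1)[OF skewA P Q S t]])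
    fix s assume "s \<in> {t..1}"
    then have s: "s \<in> {0..1}" using t by auto
    have "norm (S s) \<le> 1" by (rule inverse_transport_solution_norm_le[OF skewA P S s])
    moreover have "norm (Q s) \<le> 1" by (rule transport_solution_norm_le[OF skewB Q s])
    ultimately show "norm (S s o\<^sub>L ((B s - A s) o\<^sub>L Q s)) \<le> e"
      using close[OF s] norm_blinfun_compose_le_left norm_blinfun_compose_le_right order_trans by metis
  qed (use t in auto)
  also have "\<dots> \<le> e" using t e by (simp add: mult_left_le)
  finally have "norm ((S t o\<^sub>L Q t) - id_blinfun) \<le> e" .
  then show ?thesis
    unfolding duhamel_formula(2)[OF skewA P Q S t]
    by (rule order_trans[OF norm_blinfun_compose_le_left[OF transport_solution_norm_le[OF skewA P t]]])
qed

lemma duhamel_formula_variation: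
  fixes A0 A1 D P0 P1 S0 :: "real \<Rightarrow> ('f::euclidean_space \<Rightarrow>\<^sub>L 'f)"
  assumes skew0: "\<forall>t\<in>{0..1}. skew (A0 t)"
    and P0: "transport_solution A0 P0" and P1: "transport_solution A1 P1"
    and S0: "inverse_transport_solution A0 S0" and D: "continuous_on {0..1} D"
  obtains I where
    "((\<lambda>t. S0 t o\<^sub>L (((A1 t - A0 t - h *\<^sub>R D t) o\<^sub>L P1 t) + h *\<^sub>R (D t o\<^sub>L (P1 t - P0 t))))
      has_integral I) {0..1}"
    "P1 0 - P0 0 - h *\<^sub>R (P0 0 o\<^sub>L integral {0..1} (\<lambda>t. S0 t o\<^sub>L (D t o\<^sub>L P0 t))) = P0 0 o\<^sub>L I"
proof -
  define J where "J = integral {0..1} (\<lambda>t. S0 t o\<^sub>L (D t o\<^sub>L P0 t))"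
  define I where "I = (S0 0 o\<^sub>L P1 0) - id_blinfun"
  have "continuous_on {0..1} (\<lambda>t. S0 t o\<^sub>L (D t o\<^sub>L P0 t))"
    using inverse_transport_solution_continuous[OF S0] transport_solution_continuous[OF P0] D
    by (intro continuous_intros)
  then have J: "((\<lambda>t. S0 t o\<^sub>L (D t o\<^sub>L P0 t)) has_integral J) {0..1}"
    unfolding J_def using integrable_continuous_real by (blast intro: integrable_integral)
  have "((\<lambda>t. S0 t o\<^sub>L ((A1 t - A0 t) o\<^sub>L P1 t)) has_integral I) {0..1}"
    using duhamel_formula(1)[OF skew0 P0 P1 S0, of 0] unfolding I_def by simp
  then have "((\<lambda>t. (S0 t o\<^sub>L ((A1 t - A0 t) o\<^sub>L P1 t)) - h *\<^sub>R (S0 t o\<^sub>L (D t o\<^sub>L P0 t)))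
      has_integral (I - h *\<^sub>R J)) {0..1}"
    by (intro has_integral_diff has_integral_cmul J)
  moreover have "(\<lambda>t. (S0 t o\<^sub>L ((A1 t - A0 t) o\<^sub>L P1 t)) - h *\<^sub>R (S0 t o\<^sub>L (D t o\<^sub>L P0 t)))
      = (\<lambda>t. S0 t o\<^sub>L (((A1 t - A0 t - h *\<^sub>R D t) o\<^sub>L P1 t) + h *\<^sub>R (D t o\<^sub>L (P1 t - P0 t))))"
    by (intro ext blinfun_eqI) (simp add: blinfun.bilinear_simps algebra_simps)
  moreover have "P1 0 - P0 0 - h *\<^sub>R (P0 0 o\<^sub>L J) = P0 0 o\<^sub>L (I - h *\<^sub>R J)"
    using duhamel_formula(2)[OF skew0 P0 P1 S0, of 0] unfolding I_def
    by (intro blinfun_eqI) (simp add: blinfun.bilinear_simps)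
  ultimately show ?thesis using that unfolding J_def by simp
qed

lemma transport_solution_variation:
  fixes A0 A1 D P0 P1 S0 :: "real \<Rightarrow> ('f::euclidean_space \<Rightarrow>\<^sub>L 'f)"
  assumes skew0: "\<forall>t\<in>{0..1}. skew (A0 t)" and skew1: "\<forall>t\<in>{0..1}. skew (A1 t)"
    and P0: "transport_solution A0 P0" and P1: "transport_solution A1 P1"
    and S0: "inverse_transport_solution A0 S0" and D: "continuous_on {0..1} D"
    and lin: "\<And>t. t \<in> {0..1} \<Longrightarrow> norm (A1 t - A0 t - h *\<^sub>R D t) \<le> a"
    and close: "\<And>t. t \<in> {0..1} \<Longrightarrow> norm (A1 t - A0 t) \<le> b"
    and K: "\<And>t. t \<in> {0..1} \<Longrightarrow> norm (D t) \<le> K"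
  shows "norm (P1 0 - P0 0 - h *\<^sub>R (P0 0 o\<^sub>L integral {0..1} (\<lambda>t. S0 t o\<^sub>L (D t o\<^sub>L P0 t))))
    \<le> a + \<bar>h\<bar> * K * b"
proof -
  obtain I where int: "((\<lambda>t. S0 t o\<^sub>L (((A1 t - A0 t - h *\<^sub>R D t) o\<^sub>L P1 t) + h *\<^sub>R (D t o\<^sub>L (P1 t - P0 t))))
      has_integral I) {0..1}"
    and eq: "P1 0 - P0 0 - h *\<^sub>R (P0 0 o\<^sub>L integral {0..1} (\<lambda>t. S0 t o\<^sub>L (D t o\<^sub>L P0 t))) = P0 0 o\<^sub>L I"
    by (rule duhamel_formula_variation[OF skew0 P0 P1 S0 D])
  have a: "0 \<le> a" and b: "0 \<le> b" and "0 \<le> K"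
    using order_trans[OF norm_ge_zero lin[of 0]] order_trans[OF norm_ge_zero close[of 0]]
      order_trans[OF norm_ge_zero K[of 0]] by auto
  have "norm I \<le> (a + \<bar>h\<bar> * K * b) * (1 - 0)"
  proof (rule has_integral_Icc_norm_le[OF _ int])
    show "0 \<le> a + \<bar>h\<bar> * K * b" using a b \<open>0 \<le> K\<close> by simp
    fix t :: real assume t: "t \<in> {0..1}"
    have "norm ((A1 t - A0 t - h *\<^sub>R D t) o\<^sub>L P1 t) \<le> a"
      using norm_blinfun_compose_le_right[OF transport_solution_norm_le[OF skew1 P1 t]] lin[OF t]
      by (rule order_trans)
    moreover have "norm (D t o\<^sub>L (P1 t - P0 t)) \<le> K * b"
      using norm_blinfun_compose[of "D t" "P1 t - P0 t"]
        mult_mono[OF K[OF t] transport_solution_dist_le[OF skew0 skew1 P0 P1 S0 t close] \<open>0 \<le> K\<close>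
          norm_ge_zero]
      by linarith
    then have "norm (h *\<^sub>R (D t o\<^sub>L (P1 t - P0 t))) \<le> \<bar>h\<bar> * (K * b)"
      by (simp add: mult_left_mono)
    ultimately have "norm (((A1 t - A0 t - h *\<^sub>R D t) o\<^sub>L P1 t) + h *\<^sub>R (D t o\<^sub>L (P1 t - P0 t)))
        \<le> a + \<bar>h\<bar> * K * b"
      by (simp add: norm_triangle_le mult.assoc)
    then show "norm (S0 t o\<^sub>L (((A1 t - A0 t - h *\<^sub>R D t) o\<^sub>L P1 t) + h *\<^sub>R (D t o\<^sub>L (P1 t - P0 t))))
        \<le> a + \<bar>h\<bar> * K * b"
      using norm_blinfun_compose_le_left[OF inverse_transport_solution_norm_le[OF skew0 P0 S0 t]]
      by (rule order_trans[rotated])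
  qed simp
  then show ?thesis
    unfolding eq using norm_blinfun_compose_le_left[OF transport_solution_norm_le[OF skew0 P0, of 0], of I]
    by simp
qed

lemma uniform_continuity_in_parameter:
  fixes f :: "real \<Rightarrow> real \<Rightarrow> 'b::real_normed_vector"
  assumes cont: "continuous_on ({0..1} \<times> {0..1}) (\<lambda>p. f (fst p) (snd p))" and e: "\<epsilon> > 0"
  obtains d where "d > 0" "\<And>s0 s t. s0 \<in> {0..1} \<Longrightarrow> s \<in> {0..1} \<Longrightarrow> t \<in> {0..1} \<Longrightarrow>
    \<bar>s - s0\<bar> < d \<Longrightarrow> norm (f s t - f s0 t) < \<epsilon>"
proof -
  have "uniformly_continuous_on ({0..1} \<times> {0..1}) (\<lambda>p. f (fst p) (snd p))"
    by (rule compact_uniformly_continuous[OF cont compact_Times[OF compact_Icc compact_Icc]])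
  then obtain d where "d > 0" and d: "\<And>p q. p \<in> {0..1} \<times> {0..1} \<Longrightarrow> q \<in> {0..1} \<times> {0..1} \<Longrightarrow>
      dist q p < d \<Longrightarrow> dist (f (fst q) (snd q)) (f (fst p) (snd p)) < \<epsilon>"
    using e unfolding uniformly_continuous_on_def by metis
  show ?thesis
  proof (rule that[OF \<open>d > 0\<close>])
    fix s0 s t :: real assume "s0 \<in> {0..1}" "s \<in> {0..1}" "t \<in> {0..1}" "\<bar>s - s0\<bar> < d"
    then show "norm (f s t - f s0 t) < \<epsilon>"
      using d[of "(s0, t)" "(s, t)"] by (simp add: dist_Pair_Pair dist_real_def dist_norm)
  qed
qed

lemma uniform_linearization_in_parameter:
  fixes f f' :: "real \<Rightarrow> real \<Rightarrow> 'b::real_normed_vector"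
  assumes deriv: "\<And>s t. s \<in> {0..1} \<Longrightarrow> t \<in> {0..1} \<Longrightarrow>
      ((\<lambda>s. f s t) has_vector_derivative f' s t) (at s within {0..1})"
    and cont: "continuous_on ({0..1} \<times> {0..1}) (\<lambda>p. f' (fst p) (snd p))" and e: "\<epsilon> > 0"
  obtains d where "d > 0" "\<And>s0 s t. s0 \<in> {0..1} \<Longrightarrow> s \<in> {0..1} \<Longrightarrow> t \<in> {0..1} \<Longrightarrow>
    \<bar>s - s0\<bar> < d \<Longrightarrow> norm (f s t - f s0 t - (s - s0) *\<^sub>R f' s0 t) \<le> \<epsilon> * \<bar>s - s0\<bar>"
proof -
  obtain d where "d > 0" and d: "\<And>s0 s t. s0 \<in> {0..1} \<Longrightarrow> s \<in> {0..1} \<Longrightarrow> t \<in> {0..1} \<Longrightarrow>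
      \<bar>s - s0\<bar> < d \<Longrightarrow> norm (f' s t - f' s0 t) < \<epsilon>"
    using uniform_continuity_in_parameter[OF cont e] by blast
  show ?thesis
  proof (rule that[OF \<open>d > 0\<close>])
    fix s0 s t :: real assume s0: "s0 \<in> {0..1}" and s: "s \<in> {0..1}" and t: "t \<in> {0..1}"
      and sd: "\<bar>s - s0\<bar> < d"
    have seg: "closed_segment s0 s \<subseteq> {0..1}" using s0 s by (simp add: closed_segment_subset)
    have "norm (f s t - f s0 t - (s - s0) *\<^sub>R f' s0 t) \<le> norm (s - s0) * \<epsilon>"
    proof (rule differentiable_bound_linearization[where S="closed_segment s0 s"
          and f="\<lambda>s. f s t" and f'="\<lambda>\<sigma> h. h *\<^sub>R f' \<sigma> t"])
      show "s0 + r *\<^sub>R (s - s0) \<in> closed_segment s0 s" if "r \<in> {0..1}" for r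
        using that unfolding closed_segment_def by (auto intro!: exI[of _ r] simp: algebra_simps)
      show "((\<lambda>s. f s t) has_derivative (\<lambda>h. h *\<^sub>R f' \<sigma> t)) (at \<sigma> within closed_segment s0 s)"
        if "\<sigma> \<in> closed_segment s0 s" for \<sigma>
      proof -
        have "\<sigma> \<in> {0..1}" using that seg by auto
        then show ?thesis
          using has_derivative_subset[OF deriv[OF _ t, unfolded has_vector_derivative_def] seg] by blast
      qed
      show "onorm ((\<lambda>h. h *\<^sub>R f' \<sigma> t) - (\<lambda>h. h *\<^sub>R f' s0 t)) \<le> \<epsilon>"
        if \<sigma>: "\<sigma> \<in> closed_segment s0 s" for \<sigma>
      proof (rule onorm_bound)
        have "dist \<sigma> s0 \<le> dist s0 s" using dist_in_closed_segment[OF \<sigma>] by blast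
        then have lt: "norm (f' \<sigma> t - f' s0 t) < \<epsilon>"
          using d[OF s0 subsetD[OF seg \<sigma>] t] sd by (simp add: dist_real_def abs_minus_commute)
        show "norm (((\<lambda>h. h *\<^sub>R f' \<sigma> t) - (\<lambda>h. h *\<^sub>R f' s0 t)) h) \<le> \<epsilon> * norm h" for h
          using mult_right_mono[OF less_imp_le[OF lt], of "\<bar>h\<bar>"]
          by (simp add: scaleR_diff_right[symmetric] mult.commute)
      qed (use e in simp)
    qed simp
    then show "norm (f s t - f s0 t - (s - s0) *\<^sub>R f' s0 t) \<le> \<epsilon> * \<bar>s - s0\<bar>"
      by (simp add: mult.commute)
  qed
qed

lemma continuous_on_square_norm_bound:
  fixes f :: "real \<Rightarrow> real \<Rightarrow> 'b::real_normed_vector"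
  assumes "continuous_on ({0..1} \<times> {0..1}) (\<lambda>p. f (fst p) (snd p))"
  obtains K where "K > 0" "\<And>s t. s \<in> {0..1} \<Longrightarrow> t \<in> {0..1} \<Longrightarrow> norm (f s t) \<le> K"
  using compact_imp_bounded[OF compact_continuous_image[OF assms compact_Times[OF compact_Icc compact_Icc]]]
  by (force simp: bounded_pos)

lemma uniform_lipschitz_in_parameter:
  fixes f f' :: "real \<Rightarrow> real \<Rightarrow> 'b::real_normed_vector"
  assumes deriv: "\<And>s t. s \<in> {0..1} \<Longrightarrow> t \<in> {0..1} \<Longrightarrow>
      ((\<lambda>s. f s t) has_vector_derivative f' s t) (at s within {0..1})"
    and cont: "continuous_on ({0..1} \<times> {0..1}) (\<lambda>p. f' (fst p) (snd p))"
  obtains d C where "d > 0" "0 \<le> C" "\<And>s0 s t. s0 \<in> {0..1} \<Longrightarrow> s \<in> {0..1} \<Longrightarrow> t \<in> {0..1} \<Longrightarrow>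
    \<bar>s - s0\<bar> < d \<Longrightarrow> norm (f s t - f s0 t) \<le> C * \<bar>s - s0\<bar>"
proof -
  obtain K where "K > 0" and K: "\<And>s t. s \<in> {0..1} \<Longrightarrow> t \<in> {0..1} \<Longrightarrow> norm (f' s t) \<le> K"
    using continuous_on_square_norm_bound[OF cont] by blast
  obtain d where "d > 0" and d: "\<And>s0 s t. s0 \<in> {0..1} \<Longrightarrow> s \<in> {0..1} \<Longrightarrow> t \<in> {0..1} \<Longrightarrow>
      \<bar>s - s0\<bar> < d \<Longrightarrow> norm (f s t - f s0 t - (s - s0) *\<^sub>R f' s0 t) \<le> 1 * \<bar>s - s0\<bar>"
    using uniform_linearization_in_parameter[OF deriv cont, of 1] by auto
  show ?thesis
  proof (rule that[OF \<open>d > 0\<close>])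
    show "0 \<le> 1 + K" using \<open>K > 0\<close> by simp
    fix s0 s t :: real assume s0: "s0 \<in> {0..1}" and st: "s \<in> {0..1}" "t \<in> {0..1}" "\<bar>s - s0\<bar> < d"
    have "norm (f s t - f s0 t)
        \<le> norm (f s t - f s0 t - (s - s0) *\<^sub>R f' s0 t) + norm ((s - s0) *\<^sub>R f' s0 t)"
      using norm_triangle_ineq[of "f s t - f s0 t - (s - s0) *\<^sub>R f' s0 t" "(s - s0) *\<^sub>R f' s0 t"] by simp
    also have "\<dots> \<le> 1 * \<bar>s - s0\<bar> + \<bar>s - s0\<bar> * K"
      using d[OF s0 st] K[OF s0 st(2)] by (intro add_mono) (auto intro: mult_left_mono)
    finally show "norm (f s t - f s0 t) \<le> (1 + K) * \<bar>s - s0\<bar>" by (simp add: algebra_simps)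
  qed
qed

lemma transport_solution_has_derivative_parameter:
  fixes A dA P :: "real \<Rightarrow> real \<Rightarrow> ('f::euclidean_space \<Rightarrow>\<^sub>L 'f)"
  assumes skew: "\<forall>s\<in>{0..1}. \<forall>t\<in>{0..1}. skew (A s t)"
    and A_deriv: "\<And>s t. s \<in> {0..1} \<Longrightarrow> t \<in> {0..1} \<Longrightarrow>
      ((\<lambda>s. A s t) has_vector_derivative dA s t) (at s within {0..1})"
    and dA_cont: "continuous_on ({0..1} \<times> {0..1}) (\<lambda>p. dA (fst p) (snd p))"
    and P: "\<And>s. s \<in> {0..1} \<Longrightarrow> transport_solution (A s) (P s)"
    and S: "inverse_transport_solution (A s0) S" and s0: "s0 \<in> {0..1}"
  shows "((\<lambda>s. P s 0) has_vector_derivative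
      (P s0 0 o\<^sub>L integral {0..1} (\<lambda>t. S t o\<^sub>L (dA s0 t o\<^sub>L P s0 t)))) (at s0 within {0..1})"
  unfolding has_vector_derivative_def has_derivative_within_alt
proof (intro conjI allI impI bounded_linear_scaleR_left)
  fix \<epsilon> :: real assume e: "\<epsilon> > 0"
  define J where "J = integral {0..1} (\<lambda>t. S t o\<^sub>L (dA s0 t o\<^sub>L P s0 t))"
  obtain K where "K > 0" and K: "\<And>s t. s \<in> {0..1} \<Longrightarrow> t \<in> {0..1} \<Longrightarrow> norm (dA s t) \<le> K"
    using continuous_on_square_norm_bound[OF dA_cont] by blast
  have "continuous_on {0..1} (\<lambda>t. dA (fst (s0, t)) (snd (s0, t)))"
    by (rule continuous_on_compose2[OF dA_cont]) (use s0 in \<open>auto intro!: continuous_intros\<close>)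
  then have dA0_cont: "continuous_on {0..1} (dA s0)" by simp
  obtain d1 where "d1 > 0" and lin: "\<And>r s t. r \<in> {0..1} \<Longrightarrow> s \<in> {0..1} \<Longrightarrow> t \<in> {0..1} \<Longrightarrow>
      \<bar>s - r\<bar> < d1 \<Longrightarrow> norm (A s t - A r t - (s - r) *\<^sub>R dA r t) \<le> \<epsilon> / 2 * \<bar>s - r\<bar>"
    using uniform_linearization_in_parameter[OF A_deriv dA_cont half_gt_zero[OF e]] by blast
  obtain d2 C where "d2 > 0" "0 \<le> C" and close: "\<And>r s t. r \<in> {0..1} \<Longrightarrow> s \<in> {0..1} \<Longrightarrow> t \<in> {0..1} \<Longrightarrow>
      \<bar>s - r\<bar> < d2 \<Longrightarrow> norm (A s t - A r t) \<le> C * \<bar>s - r\<bar>"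
    using uniform_lipschitz_in_parameter[OF A_deriv dA_cont] by blast
  have "0 \<le> K * C" using \<open>K > 0\<close> \<open>0 \<le> C\<close> by simp
  define d where "d = min (min d1 d2) (\<epsilon> / (2 * (K * C + 1)))"
  show "\<exists>d>0. \<forall>s\<in>{0..1}. norm (s - s0) < d \<longrightarrow>
      norm (P s 0 - P s0 0 - (s - s0) *\<^sub>R (P s0 0 o\<^sub>L J)) \<le> \<epsilon> * norm (s - s0)"
  proof (intro exI[of _ d] conjI ballI impI)
    have "0 < 2 * (K * C + 1)" using \<open>0 \<le> K * C\<close> by (intro mult_pos_pos add_nonneg_pos) auto
    then show "d > 0" unfolding d_def using \<open>d1 > 0\<close> \<open>d2 > 0\<close> divide_pos_pos[OF e] by simp
    fix s assume s: "s \<in> {0..1}" and sd: "norm (s - s0) < d"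
    define h where "h = s - s0"
    have "norm (P s 0 - P s0 0 - h *\<^sub>R (P s0 0 o\<^sub>L J)) \<le> \<epsilon> / 2 * \<bar>h\<bar> + \<bar>h\<bar> * K * (C * \<bar>h\<bar>)"
      unfolding J_def h_def
      by (rule transport_solution_variation[OF bspec[OF skew s0] bspec[OF skew s] P[OF s0] P[OF s] S
            dA0_cont lin[OF s0 s] close[OF s0 s] K[OF s0]]) (use sd in \<open>auto simp: d_def\<close>)
    also have "\<bar>h\<bar> * K * (C * \<bar>h\<bar>) \<le> \<bar>h\<bar> * (\<epsilon> / 2)"
    proof -
      have "\<bar>h\<bar> * (K * C + 1) \<le> \<epsilon> / 2"
        using sd \<open>0 \<le> K * C\<close> unfolding h_def d_def by (simp add: field_simps)
      then have "\<bar>h\<bar> * (\<bar>h\<bar> * (K * C)) \<le> \<bar>h\<bar> * (\<epsilon> / 2)"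
        by (intro mult_left_mono) (auto simp: algebra_simps)
      then show ?thesis by (simp add: mult_ac)
    qed
    finally show "norm (P s 0 - P s0 0 - (s - s0) *\<^sub>R (P s0 0 o\<^sub>L J)) \<le> \<epsilon> * norm (s - s0)"
      unfolding h_def by simp
  qed
qed

definition parallelogram_area :: "'a::real_inner \<Rightarrow> 'a \<Rightarrow> real" where
  "parallelogram_area v w = sqrt ((norm v)\<^sup>2 * (norm w)\<^sup>2 - (inner v w)\<^sup>2)"

lemma triangle_area_eq_parallelogram_area:
  "triangle_area x y z = parallelogram_area (y - x) (z - x) / 2"
  unfolding triangle_area_def parallelogram_area_def Let_def ..

lemma inner_power2_le_norms: "(inner v w)\<^sup>2 \<le> (norm v)\<^sup>2 * (norm w)\<^sup>2"
  using power_mono[OF Cauchy_Schwarz_ineq2[of v w] abs_ge_zero, of 2]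
  by (simp add: power_mult_distrib)

lemma parallelogram_area_nonneg: "0 \<le> parallelogram_area v w"
  unfolding parallelogram_area_def using inner_power2_le_norms[of v w] by simp

lemma parallelogram_area_scaleR_left: "parallelogram_area (t *\<^sub>R v) w = \<bar>t\<bar> * parallelogram_area v w"
proof -
  have "(norm (t *\<^sub>R v))\<^sup>2 * (norm w)\<^sup>2 - (inner (t *\<^sub>R v) w)\<^sup>2
      = t\<^sup>2 * ((norm v)\<^sup>2 * (norm w)\<^sup>2 - (inner v w)\<^sup>2)"
    by (simp add: power_mult_distrib algebra_simps)
  then show ?thesis unfolding parallelogram_area_def by (simp add: real_sqrt_mult)
qed

lemma parallelogram_area_add_scaleR_right: "parallelogram_area v (w + c *\<^sub>R v) = parallelogram_area v w"
  unfolding parallelogram_area_def power2_norm_eq_inner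
  by (simp add: inner_add_left inner_add_right inner_commute algebra_simps power2_eq_square)

lemma parallelogram_area_commute: "parallelogram_area v w = parallelogram_area w v"
  unfolding parallelogram_area_def by (simp add: inner_commute mult.commute)

lemma parallelogram_area_eq_base_height:
  assumes "v \<noteq> 0"
  shows "norm v * norm (w - (inner v w / (norm v)\<^sup>2) *\<^sub>R v) = parallelogram_area v w"
proof -
  define c where "c = inner v w / (norm v)\<^sup>2"
  have nv: "(norm v)\<^sup>2 > 0" using assms by simp
  have "(norm (w - c *\<^sub>R v))\<^sup>2 = (norm w)\<^sup>2 - 2 * c * inner v w + c\<^sup>2 * (norm v)\<^sup>2"
    by (simp only: power2_norm_eq_inner)
      (simp add: inner_diff_left inner_diff_right inner_commute algebra_simps power2_eq_square)
  also have "\<dots> = (norm w)\<^sup>2 - (inner v w)\<^sup>2 / (norm v)\<^sup>2"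
    unfolding c_def using nv by (simp add: field_simps power2_eq_square)
  finally have "(norm v * norm (w - c *\<^sub>R v))\<^sup>2 = (parallelogram_area v w)\<^sup>2"
    unfolding parallelogram_area_def using nv inner_power2_le_norms[of v w]
    by (simp add: power_mult_distrib field_simps)
  then show ?thesis unfolding c_def[symmetric]
    using parallelogram_area_nonneg[of v w] by (simp add: power2_eq_iff_nonneg)
qed

lemma curvature_self [simp]: "curvature \<Gamma> DG p v v = 0"
  unfolding curvature_def by simp

lemma curvature_zero_left [simp]: "curvature \<Gamma> DG p 0 w = 0"
  unfolding curvature_def by (rule blinfun_eqI) (simp add: blinfun.bilinear_simps)

lemma curvature_add_scaleR_right: "curvature \<Gamma> DG p v (w + c *\<^sub>R v) = curvature \<Gamma> DG p v w"
proof -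
  have "curvature \<Gamma> DG p v (w + c *\<^sub>R v) = curvature \<Gamma> DG p v w + c *\<^sub>R curvature \<Gamma> DG p v v"
    unfolding curvature_def by (rule blinfun_eqI) (simp add: blinfun.bilinear_simps algebra_simps)
  then show ?thesis by simp
qed

lemma curvature_bounded:
  fixes \<Gamma> :: "'p::real_normed_vector \<Rightarrow> ('p \<Rightarrow>\<^sub>L ('f::euclidean_space \<Rightarrow>\<^sub>L 'f))"
  obtains c where "0 \<le> c" "\<And>v w. norm (curvature \<Gamma> DG p v w) \<le> c * (norm v * norm w)"
proof
  show "0 \<le> 2 * norm (DG p) + 2 * (norm (\<Gamma> p))\<^sup>2" by simp
  fix v w
  have DG: "norm (DG p v w) \<le> norm (DG p) * (norm v * norm w)" for v w
    using norm_blinfun[of "DG p v" w] mult_right_mono[OF norm_blinfun[of "DG p" v] norm_ge_zero[of w]]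
    by (simp add: mult.assoc)
  have \<Gamma>: "norm (\<Gamma> p v o\<^sub>L \<Gamma> p w) \<le> (norm (\<Gamma> p))\<^sup>2 * (norm v * norm w)" for v w
    using norm_blinfun_compose[of "\<Gamma> p v" "\<Gamma> p w"]
      mult_mono[OF norm_blinfun[of "\<Gamma> p" v] norm_blinfun[of "\<Gamma> p" w]]
    by (simp add: power2_eq_square algebra_simps)
  have "norm (curvature \<Gamma> DG p v w) \<le> norm (DG p v w) + norm (DG p w v)
      + norm (\<Gamma> p v o\<^sub>L \<Gamma> p w) + norm (\<Gamma> p w o\<^sub>L \<Gamma> p v)"
    unfolding curvature_def by (smt (verit) norm_triangle_ineq4 norm_triangle_ineq)
  also have "\<dots> \<le> (2 * norm (DG p) + 2 * (norm (\<Gamma> p))\<^sup>2) * (norm v * norm w)"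
    using DG[of v w] DG[of w v] \<Gamma>[of v w] \<Gamma>[of w v] by (simp add: algebra_simps)
  finally show "norm (curvature \<Gamma> DG p v w) \<le> (2 * norm (DG p) + 2 * (norm (\<Gamma> p))\<^sup>2) * (norm v * norm w)" .
qed

text \<open>The curvature is alternating and linear in each slot, so only the component of \<open>w\<close>
  orthogonal to \<open>v\<close> contributes.\<close>

lemma norm_curvature_le_parallelogram_area:
  assumes c0: "0 \<le> c" and c: "\<And>v w. norm (curvature \<Gamma> DG p v w) \<le> c * (norm v * norm w)"
  shows "norm (curvature \<Gamma> DG p v w) \<le> c * parallelogram_area v w"
proof (cases "v = 0")
  case True
  then show ?thesis using c0 parallelogram_area_nonneg[of 0 w] by simp
next
  case False
  define w' where "w' = w - (inner v w / (norm v)\<^sup>2) *\<^sub>R v"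
  have "curvature \<Gamma> DG p v w = curvature \<Gamma> DG p v w'"
    using curvature_add_scaleR_right[of \<Gamma> DG p v w' "inner v w / (norm v)\<^sup>2"] unfolding w'_def by simp
  also have "norm \<dots> \<le> c * (norm v * norm w')" by (rule c)
  also have "norm v * norm w' = parallelogram_area v w"
    unfolding w'_def by (rule parallelogram_area_eq_base_height[OF False])
  finally show ?thesis .
qed

lemma curvature_eq_0_if_parallelogram_area_eq_0:
  fixes \<Gamma> :: "'p::real_inner \<Rightarrow> ('p \<Rightarrow>\<^sub>L ('f::euclidean_space \<Rightarrow>\<^sub>L 'f))"
  assumes "parallelogram_area v w = 0"
  shows "curvature \<Gamma> DG p v w = 0"
proof -
  obtain c where "0 \<le> c" "\<And>v w. norm (curvature \<Gamma> DG p v w) \<le> c * (norm v * norm w)"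
    using curvature_bounded[of \<Gamma> DG p] by metis
  from norm_curvature_le_parallelogram_area[OF this, of v w] assms show ?thesis by simp
qed

lemma curvature_sup_nonneg:
  fixes \<Gamma> :: "'p::euclidean_space \<Rightarrow> ('p \<Rightarrow>\<^sub>L ('f::euclidean_space \<Rightarrow>\<^sub>L 'f))"
  assumes "p \<in> S"
  shows "0 \<le> curvature_sup \<Gamma> DG S"
proof -
  obtain v :: 'p where v: "v \<noteq> 0" using nonzero_Basis SOME_Basis by blast
  have "ereal (norm (curvature \<Gamma> DG p (fst (v, v)) (snd (v, v))) / (norm (fst (v, v)) * norm (snd (v, v))))
      \<le> curvature_sup \<Gamma> DG S"
    unfolding curvature_sup_def
    by (rule SUP_upper2[OF assms], rule SUP_upper2[where i="(v, v)"]) (use v in auto)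
  then show ?thesis by (simp add: zero_ereal_def)
qed

lemma norm_curvature_le_curvature_sup:
  assumes "curvature_sup \<Gamma> DG S = ereal k" "0 \<le> k" "p \<in> S"
  shows "norm (curvature \<Gamma> DG p v w) \<le> k * (norm v * norm w)"
proof (cases "v = 0 \<or> w = 0")
  case True
  then show ?thesis
    by (auto simp: curvature_def blinfun.bilinear_simps)
next
  case False
  have "ereal (norm (curvature \<Gamma> DG p (fst (v, w)) (snd (v, w))) / (norm (fst (v, w)) * norm (snd (v, w))))
      \<le> curvature_sup \<Gamma> DG S"
    unfolding curvature_sup_def
    by (rule SUP_upper2[OF assms(3)], rule SUP_upper2[where i="(v, w)"]) (use False in auto)
  then show ?thesis using False assms(1) by (simp add: pos_divide_le_eq)
qed

definition segment_connection ::
    "('p::real_normed_vector \<Rightarrow> ('p \<Rightarrow>\<^sub>L ('f::real_normed_vector \<Rightarrow>\<^sub>L 'f))) \<Rightarrow> 'p \<Rightarrow> 'p \<Rightarrow> real \<Rightarrow> ('f \<Rightarrow>\<^sub>L 'f)"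
  where "segment_connection \<Gamma> p q t = \<Gamma> ((1 - t) *\<^sub>R p + t *\<^sub>R q) (q - p)"

lemma is_parallel_transport_iff:
  "is_parallel_transport \<Gamma> p q P \<longleftrightarrow> transport_solution (segment_connection \<Gamma> p q) P"
  unfolding is_parallel_transport_def transport_solution_def segment_connection_def ..

lemma transport_eq_transport_solution:
  fixes \<Gamma> :: "'p::real_normed_vector \<Rightarrow> ('p \<Rightarrow>\<^sub>L ('f::euclidean_space \<Rightarrow>\<^sub>L 'f))"
  assumes skew: "\<forall>t\<in>{0..1}. skew (segment_connection \<Gamma> p q t)"
    and P: "transport_solution (segment_connection \<Gamma> p q) P"
  shows "transport \<Gamma> p q = P 0"
  unfolding transport_def is_parallel_transport_iff
proof (rule the_equality)
  show "\<exists>P'. transport_solution (segment_connection \<Gamma> p q) P' \<and> P' 0 = P 0" using P by blast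
  fix A assume "\<exists>P'. transport_solution (segment_connection \<Gamma> p q) P' \<and> P' 0 = A"
  then obtain P' where "transport_solution (segment_connection \<Gamma> p q) P'" "P' 0 = A" by blast
  then show "A = P 0" using transport_solution_unique[OF skew _ P, of P' 0] by simp
qed

lemma transport_triangle_ineq:
  fixes T Q R :: "'a::real_normed_vector \<Rightarrow>\<^sub>L 'a"
  assumes "\<And>v. norm (T v) = norm v"
  shows "norm (a - T b) \<le> norm (a - R c) + norm (b - Q c) + norm ((R - (T o\<^sub>L Q)) c)"
proof -
  have eq: "a - T b = (a - R c) + (R - (T o\<^sub>L Q)) c - T (b - Q c)"
    by (simp add: blinfun.diff_left blinfun.diff_right)
  have "norm (a - T b) \<le> norm (a - R c) + norm ((R - (T o\<^sub>L Q)) c) + norm (T (b - Q c))"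
    using norm_triangle_ineq4[of "(a - R c) + (R - (T o\<^sub>L Q)) c" "T (b - Q c)"]
      norm_triangle_ineq[of "a - R c" "(R - (T o\<^sub>L Q)) c"]
    unfolding eq by linarith
  then show ?thesis using assms by simp
qed

locale connection =
  fixes \<Gamma> :: "'p::euclidean_space \<Rightarrow> ('p \<Rightarrow>\<^sub>L ('f::euclidean_space \<Rightarrow>\<^sub>L 'f))"
    and DG :: "'p \<Rightarrow> ('p \<Rightarrow>\<^sub>L ('p \<Rightarrow>\<^sub>L ('f \<Rightarrow>\<^sub>L 'f)))"
    and H :: "'p set"
  assumes convex: "convex H"
    and G_deriv: "\<And>p. p \<in> H \<Longrightarrow> (\<Gamma> has_derivative blinfun_apply (DG p)) (at p within H)"
    and G_cont: "continuous_on H DG"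
    and G_skew: "\<And>p v. p \<in> H \<Longrightarrow> skew (\<Gamma> p v)"
begin

lemma Gamma_continuous: "continuous_on H \<Gamma>"
  using G_deriv has_derivative_continuous continuous_on_eq_continuous_within by blast

lemma has_vector_derivative_Gamma_comp:
  assumes "(\<phi> has_vector_derivative \<phi>') (at r within {0..1})" "\<phi> ` {0..1} \<subseteq> H" "r \<in> {0..1}"
  shows "((\<lambda>r. \<Gamma> (\<phi> r)) has_vector_derivative DG (\<phi> r) \<phi>') (at r within {0..1})"
proof -
  have "((\<lambda>r. \<Gamma> (\<phi> r)) has_derivative (\<lambda>h. DG (\<phi> r) (h *\<^sub>R \<phi>'))) (at r within {0..1})"
    using assms by (intro has_derivative_in_compose2[OF G_deriv]) (auto simp: has_vector_derivative_def)
  then show ?thesis unfolding has_vector_derivative_def by (simp add: blinfun.scaleR_right)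
qed

lemma segment_mem: "p \<in> H \<Longrightarrow> q \<in> H \<Longrightarrow> t \<in> {0..1} \<Longrightarrow> (1 - t) *\<^sub>R p + t *\<^sub>R q \<in> H"
  using convexD[OF convex, of p q "1 - t" t] by auto

lemma segment_connection_continuous:
  "p \<in> H \<Longrightarrow> q \<in> H \<Longrightarrow> continuous_on {0..1} (segment_connection \<Gamma> p q)"
  unfolding segment_connection_def
  by (intro continuous_intros continuous_on_compose2[OF Gamma_continuous]) (auto intro: segment_mem)

lemma segment_connection_skew:
  "p \<in> H \<Longrightarrow> q \<in> H \<Longrightarrow> \<forall>t\<in>{0..1}. skew (segment_connection \<Gamma> p q t)"
  unfolding segment_connection_def using G_skew segment_mem by blast

lemma transport_eq:
  "p \<in> H \<Longrightarrow> q \<in> H \<Longrightarrow> transport_solution (segment_connection \<Gamma> p q) P \<Longrightarrow> transport \<Gamma> p q = P 0"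
  using transport_eq_transport_solution segment_connection_skew by blast

lemma norm_transport:
  assumes "p \<in> H" "q \<in> H"
  shows "norm (transport \<Gamma> p q v) = norm v"
proof -
  obtain P where P: "transport_solution (segment_connection \<Gamma> p q) P"
    using transport_solution_exists[OF segment_connection_continuous[OF assms]] by blast
  show ?thesis
    unfolding transport_eq[OF assms P]
    by (rule transport_solution_isometry[OF segment_connection_skew[OF assms] P]) simp
qed

end

text \<open>The triangle is swept by the segments from \<open>x\<close> to the points \<open>edge s\<close> of the side
  from \<open>y\<close> to \<open>z\<close>; \<open>fan s t\<close> is the point at time \<open>t\<close> on the \<open>s\<close>-th segment, and
  \<open>holonomy_rate s\<close> is the integral \<open>C s\<close> of the overview.\<close>

locale connection_triangle = connection +
  fixes x y z
  assumes xH: "x \<in> H" and yH: "y \<in> H" and zH: "z \<in> H"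
begin

definition "side = z - y"
definition "edge s = y + s *\<^sub>R side"
definition "ray s = edge s - x"
definition "fan s t = x + t *\<^sub>R ray s"
definition "ray_connection s t = \<Gamma> (fan s t) (ray s)"
definition "ray_connection_deriv s t = DG (fan s t) (t *\<^sub>R side) (ray s) + \<Gamma> (fan s t) side"
definition "ray_transport s = (SOME P. transport_solution (ray_connection s) P)"
definition "ray_transport_inv s = (SOME S. inverse_transport_solution (ray_connection s) S)"
definition "fan_curvature s t = curvature \<Gamma> DG (fan s t) (t *\<^sub>R side) (ray s)"
definition "holonomy_defect = transport \<Gamma> x z - (transport \<Gamma> x y o\<^sub>L transport \<Gamma> y z)"
definition "holonomy_rate s =
  integral {0..1} (\<lambda>t. ray_transport_inv s t o\<^sub>L (fan_curvature s t o\<^sub>L ray_transport s t))"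

lemma edge_0 [simp]: "edge 0 = y" and edge_1 [simp]: "edge 1 = z"
  unfolding edge_def side_def by auto

lemma fan_0 [simp]: "fan s 0 = x" and fan_1 [simp]: "fan s 1 = edge s"
  unfolding fan_def ray_def by auto

lemma segment_eq_edge: "(1 - t) *\<^sub>R y + t *\<^sub>R z = edge t"
  unfolding edge_def side_def by (simp add: algebra_simps)

lemma segment_eq_fan: "(1 - t) *\<^sub>R x + t *\<^sub>R edge s = fan s t"
  unfolding fan_def ray_def by (simp add: algebra_simps)

lemma edge_mem: "s \<in> {0..1} \<Longrightarrow> edge s \<in> H"
  using segment_mem[OF yH zH] unfolding segment_eq_edge .

lemma fan_mem: "s \<in> {0..1} \<Longrightarrow> t \<in> {0..1} \<Longrightarrow> fan s t \<in> H"
  using segment_mem[OF xH edge_mem] unfolding segment_eq_fan .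

lemma ray_connection_eq: "ray_connection s = segment_connection \<Gamma> x (edge s)"
  unfolding ray_connection_def segment_connection_def segment_eq_fan ray_def ..

lemma segment_connection_side: "segment_connection \<Gamma> y z t = \<Gamma> (edge t) side"
  unfolding segment_connection_def segment_eq_edge side_def ..

lemma ray_connection_skew: "\<forall>s\<in>{0..1}. \<forall>t\<in>{0..1}. skew (ray_connection s t)"
  unfolding ray_connection_def using G_skew fan_mem by blast

lemma ray_transport: "s \<in> {0..1} \<Longrightarrow> transport_solution (ray_connection s) (ray_transport s)"
  unfolding ray_transport_def ray_connection_eq
  using transport_solution_exists[OF segment_connection_continuous[OF xH edge_mem]] by (metis someI)

lemma ray_transport_inv:
  "s \<in> {0..1} \<Longrightarrow> inverse_transport_solution (ray_connection s) (ray_transport_inv s)"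
  unfolding ray_transport_inv_def ray_connection_eq
  using inverse_transport_solution_exists[OF segment_connection_continuous[OF xH edge_mem]]
  by (metis someI)

lemma transport_to_edge: "s \<in> {0..1} \<Longrightarrow> transport \<Gamma> x (edge s) = ray_transport s 0"
  using transport_eq[OF xH edge_mem] ray_transport unfolding ray_connection_eq by blast

lemma fan_image_subset: "s \<in> {0..1} \<Longrightarrow> fan s ` {0..1} \<subseteq> H"
  and fan_parameter_image_subset: "t \<in> {0..1} \<Longrightarrow> (\<lambda>s. fan s t) ` {0..1} \<subseteq> H"
  using fan_mem by auto

lemma ray_connection_has_derivative:
  assumes "s \<in> {0..1}" "t \<in> {0..1}"
  shows "((\<lambda>s. ray_connection s t) has_vector_derivative ray_connection_deriv s t) (at s within {0..1})"
proof -
  have "((\<lambda>s. fan s t) has_vector_derivative t *\<^sub>R side) (at s within {0..1})"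
    unfolding fan_def ray_def edge_def by (auto intro!: derivative_eq_intros)
  then have "((\<lambda>s. \<Gamma> (fan s t)) has_vector_derivative DG (fan s t) (t *\<^sub>R side)) (at s within {0..1})"
    using assms fan_parameter_image_subset by (intro has_vector_derivative_Gamma_comp) auto
  moreover have "(ray has_vector_derivative side) (at s within {0..1})"
    unfolding ray_def[abs_def] edge_def by (auto intro!: derivative_eq_intros)
  ultimately show ?thesis
    unfolding ray_connection_def[abs_def] ray_connection_deriv_def
    by (subst add.commute) (rule has_vector_derivative_blinfun_apply)
qed

lemma ray_connection_deriv_continuous:
  "continuous_on ({0..1} \<times> {0..1}) (\<lambda>p. ray_connection_deriv (fst p) (snd p))"
proof -
  have fan: "continuous_on ({0..1} \<times> {0..1}) (\<lambda>p. fan (fst p) (snd p))"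
    unfolding fan_def ray_def edge_def by (intro continuous_intros)
  have image: "(\<lambda>p. fan (fst p) (snd p)) ` ({0..1} \<times> {0..1}) \<subseteq> H"
    using fan_mem by auto
  show ?thesis
    unfolding ray_connection_deriv_def ray_def edge_def
    using continuous_on_compose2[OF G_cont fan image] continuous_on_compose2[OF Gamma_continuous fan image]
    by (intro continuous_intros) auto
qed

lemma Gamma_fan_has_derivative:
  "s \<in> {0..1} \<Longrightarrow> t \<in> {0..1} \<Longrightarrow>
    ((\<lambda>t. \<Gamma> (fan s t)) has_vector_derivative DG (fan s t) (ray s)) (at t within {0..1})"
  by (rule has_vector_derivative_Gamma_comp[OF _ fan_image_subset])
    (auto simp: fan_def[abs_def] intro!: derivative_eq_intros)

lemma holonomy_rate_has_integral:
  assumes s: "s \<in> {0..1}"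
  shows "((\<lambda>t. ray_transport_inv s t o\<^sub>L (fan_curvature s t o\<^sub>L ray_transport s t))
    has_integral holonomy_rate s) {0..1}"
proof -
  have fan: "continuous_on {0..1} (fan s)" unfolding fan_def by (intro continuous_intros)
  have "continuous_on {0..1} (\<lambda>t. ray_transport_inv s t o\<^sub>L (fan_curvature s t o\<^sub>L ray_transport s t))"
    unfolding fan_curvature_def curvature_def
    using inverse_transport_solution_continuous[OF ray_transport_inv[OF s]]
      transport_solution_continuous[OF ray_transport[OF s]]
      continuous_on_compose2[OF G_cont fan fan_image_subset[OF s]]
      continuous_on_compose2[OF Gamma_continuous fan fan_image_subset[OF s]]
    by (intro continuous_intros) auto
  then show ?thesis
    unfolding holonomy_rate_def using integrable_continuous_real by (blast intro: integrable_integral)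
qed

text \<open>Integration by parts in \<open>t\<close> of \<open>\<Gamma>(fan s t)[t side]\<close> splits the parameter derivative of
  the coefficient into a boundary term and the curvature.\<close>

lemma ray_variation_integral:
  assumes s: "s \<in> {0..1}"
  shows "integral {0..1} (\<lambda>t. ray_transport_inv s t o\<^sub>L (ray_connection_deriv s t o\<^sub>L ray_transport s t))
    = \<Gamma> (edge s) side + holonomy_rate s"
proof -
  let ?P = "ray_transport s" and ?S = "ray_transport_inv s"
  define X where "X t = \<Gamma> (fan s t) (t *\<^sub>R side)" for t
  define X' where "X' t = \<Gamma> (fan s t) side + DG (fan s t) (ray s) (t *\<^sub>R side)" for t
  define G where "G t = ?S t o\<^sub>L (X t o\<^sub>L ?P t)" for t
  define G' where "G' t = (?S t o\<^sub>L ((X t o\<^sub>L - (ray_connection s t o\<^sub>L ?P t)) + (X' t o\<^sub>L ?P t)))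
      + ((?S t o\<^sub>L ray_connection s t) o\<^sub>L (X t o\<^sub>L ?P t))" for t
  have X_deriv: "(X has_vector_derivative X' t) (at t within {0..1})" if t: "t \<in> {0..1}" for t
  proof -
    have "((\<lambda>t. t *\<^sub>R side) has_vector_derivative side) (at t within {0..1})"
      by (auto intro!: derivative_eq_intros)
    then show ?thesis unfolding X_def[abs_def] X'_def
      by (rule has_vector_derivative_blinfun_apply[OF Gamma_fan_has_derivative[OF s t]])
  qed
  have "(G has_vector_derivative G' t) (at t within {0..1})" if t: "t \<in> {0..1}" for t
    unfolding G_def[abs_def] G'_def
    by (rule has_vector_derivative_blinfun_compose[OF inverse_transport_solutionD(2)[OF ray_transport_inv[OF s] t]
          has_vector_derivative_blinfun_compose[OF X_deriv[OF t] transport_solutionD(2)[OF ray_transport[OF s] t]]])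
  then have "(G' has_integral (G 1 - G 0)) {0..1}"
    by (intro fundamental_theorem_of_calculus) auto
  moreover have "G 1 = \<Gamma> (edge s) side"
    unfolding G_def X_def
    using inverse_transport_solutionD(1)[OF ray_transport_inv[OF s]] transport_solutionD(1)[OF ray_transport[OF s]]
    by (intro blinfun_eqI) simp
  moreover have "G 0 = 0" unfolding G_def X_def by (intro blinfun_eqI) simp
  moreover have "?S t o\<^sub>L (ray_connection_deriv s t o\<^sub>L ?P t) = G' t + (?S t o\<^sub>L (fan_curvature s t o\<^sub>L ?P t))" for t
    unfolding G'_def X_def X'_def fan_curvature_def curvature_def ray_connection_deriv_def ray_connection_def
    by (rule blinfun_eqI) (simp add: blinfun.bilinear_simps)
  ultimately have "((\<lambda>t. ?S t o\<^sub>L (ray_connection_deriv s t o\<^sub>L ?P t)) has_integral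
      (\<Gamma> (edge s) side + holonomy_rate s)) {0..1}"
    using has_integral_add[OF _ holonomy_rate_has_integral[OF s]] by simp
  then show ?thesis by (rule integral_unique)
qed

lemma transport_to_edge_has_derivative:
  assumes s: "s \<in> {0..1}"
  shows "((\<lambda>s. transport \<Gamma> x (edge s)) has_vector_derivative
    (transport \<Gamma> x (edge s) o\<^sub>L (\<Gamma> (edge s) side + holonomy_rate s))) (at s within {0..1})"
proof (rule has_vector_derivative_transform[OF s transport_to_edge])
  show "((\<lambda>s. ray_transport s 0) has_vector_derivative
      (transport \<Gamma> x (edge s) o\<^sub>L (\<Gamma> (edge s) side + holonomy_rate s))) (at s within {0..1})"
    using transport_solution_has_derivative_parameter[OF ray_connection_skew ray_connection_has_derivative
        ray_connection_deriv_continuous ray_transport ray_transport_inv[OF s] s]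
    unfolding ray_variation_integral[OF s] transport_to_edge[OF s] by simp
qed

lemma norm_holonomy_defect_le:
  assumes B: "\<And>s. s \<in> {0..1} \<Longrightarrow> norm (holonomy_rate s) \<le> B"
  shows "norm holonomy_defect \<le> B"
proof -
  obtain Q where Q: "transport_solution (segment_connection \<Gamma> y z) Q"
    using transport_solution_exists[OF segment_connection_continuous[OF yH zH]] by blast
  have Q_deriv: "(Q has_vector_derivative - (\<Gamma> (edge s) side o\<^sub>L Q s)) (at s within {0..1})"
    if "s \<in> {0..1}" for s
    using transport_solutionD(2)[OF Q that] unfolding segment_connection_side .
  define M where "M s = transport \<Gamma> x (edge s) o\<^sub>L Q s" for s
  define M' where "M' s = transport \<Gamma> x (edge s) o\<^sub>L (holonomy_rate s o\<^sub>L Q s)" for s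
  have "(M has_vector_derivative M' s) (at s within {0..1})" if s: "s \<in> {0..1}" for s
  proof -
    have "(M has_vector_derivative ((transport \<Gamma> x (edge s) o\<^sub>L - (\<Gamma> (edge s) side o\<^sub>L Q s))
        + ((transport \<Gamma> x (edge s) o\<^sub>L (\<Gamma> (edge s) side + holonomy_rate s)) o\<^sub>L Q s))) (at s within {0..1})"
      unfolding M_def[abs_def]
      by (rule has_vector_derivative_blinfun_compose[OF transport_to_edge_has_derivative[OF s] Q_deriv[OF s]])
    moreover have "(transport \<Gamma> x (edge s) o\<^sub>L - (\<Gamma> (edge s) side o\<^sub>L Q s))
        + ((transport \<Gamma> x (edge s) o\<^sub>L (\<Gamma> (edge s) side + holonomy_rate s)) o\<^sub>L Q s) = M' s"
      unfolding M'_def by (rule blinfun_eqI) (simp add: blinfun.bilinear_simps)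
    ultimately show ?thesis by simp
  qed
  then have "(M' has_integral (M 1 - M 0)) {0..1}"
    by (intro fundamental_theorem_of_calculus) auto
  then have "norm (M 1 - M 0) \<le> B * (1 - 0)"
  proof (rule has_integral_Icc_norm_le[rotated])
    show "0 \<le> B" using order_trans[OF norm_ge_zero B[of 0]] by simp
    fix s :: real assume s: "s \<in> {0..1}"
    have "norm (M' s) \<le> norm (holonomy_rate s)"
      unfolding M'_def
      using norm_blinfun_compose_le_left[OF norm_blinfun_le_1_if_isometry[OF norm_transport[OF xH edge_mem[OF s]]]]
        norm_blinfun_compose_le_right[OF transport_solution_norm_le[OF segment_connection_skew[OF yH zH] Q s]]
      by (meson order_trans)
    then show "norm (M' s) \<le> B" using B[OF s] by simp
  qed simp
  moreover have "M 1 = transport \<Gamma> x z"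
    unfolding M_def transport_solutionD(1)[OF Q] by (intro blinfun_eqI) simp
  moreover have "M 0 = transport \<Gamma> x y o\<^sub>L transport \<Gamma> y z"
    unfolding M_def transport_eq[OF yH zH Q] by simp
  ultimately show ?thesis unfolding holonomy_defect_def by simp
qed

lemma parallelogram_area_side_ray: "parallelogram_area side (ray s) = 2 * triangle_area x y z"
proof -
  have "parallelogram_area side (ray s) = parallelogram_area side ((y - x) + s *\<^sub>R side)"
    unfolding ray_def edge_def by (simp add: algebra_simps)
  also have "\<dots> = parallelogram_area (y - x) side"
    by (simp only: parallelogram_area_add_scaleR_right parallelogram_area_commute)
  also have "\<dots> = parallelogram_area (y - x) (side + 1 *\<^sub>R (y - x))"
    by (simp only: parallelogram_area_add_scaleR_right)
  also have "side + 1 *\<^sub>R (y - x) = z - x" unfolding side_def by simp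
  finally show ?thesis unfolding triangle_area_eq_parallelogram_area by simp
qed

lemma norm_fan_curvature_le:
  assumes "0 \<le> c" "\<And>v w. norm (curvature \<Gamma> DG (fan s t) v w) \<le> c * (norm v * norm w)" "t \<in> {0..1}"
  shows "norm (fan_curvature s t) \<le> c * (2 * triangle_area x y z) * t"
  using norm_curvature_le_parallelogram_area[OF assms(1,2), of "t *\<^sub>R side" "ray s"] assms(3)
  unfolding fan_curvature_def parallelogram_area_scaleR_left parallelogram_area_side_ray
  by (simp add: mult_ac)

lemma norm_holonomy_rate_le:
  assumes k: "0 \<le> k" "\<And>p v w. p \<in> H \<Longrightarrow> norm (curvature \<Gamma> DG p v w) \<le> k * (norm v * norm w)"
    and s: "s \<in> {0..1}"
  shows "norm (holonomy_rate s) \<le> k * triangle_area x y z"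
proof -
  have power: "((\<lambda>t. k * (2 * triangle_area x y z) * t ^ 1) has_integral
      k * (2 * triangle_area x y z) * (1 ^ Suc 1 / Suc 1)) {0..1}"
    by (intro has_integral_mult_right has_integral_power_0) simp
  have "norm (holonomy_rate s) \<le> integral {0..1} (\<lambda>t. k * (2 * triangle_area x y z) * t ^ 1)"
    unfolding integral_unique[OF holonomy_rate_has_integral[OF s], symmetric]
  proof (rule integral_norm_bound_integral)
    show "(\<lambda>t. ray_transport_inv s t o\<^sub>L (fan_curvature s t o\<^sub>L ray_transport s t)) integrable_on {0..1}"
      using holonomy_rate_has_integral[OF s] by blast
    show "(\<lambda>t. k * (2 * triangle_area x y z) * t ^ 1) integrable_on {0..1}" using power by blast
    fix t :: real assume t: "t \<in> {0..1}"
    have "norm (ray_transport_inv s t o\<^sub>L (fan_curvature s t o\<^sub>L ray_transport s t)) \<le> norm (fan_curvature s t)"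
      using norm_blinfun_compose_le_left[OF inverse_transport_solution_norm_le[OF bspec[OF ray_connection_skew s]
            ray_transport[OF s] ray_transport_inv[OF s] t]]
        norm_blinfun_compose_le_right[OF transport_solution_norm_le[OF bspec[OF ray_connection_skew s]
            ray_transport[OF s] t]]
      by (meson order_trans)
    also have "\<dots> \<le> k * (2 * triangle_area x y z) * t"
      by (rule norm_fan_curvature_le[OF k(1) k(2)[OF fan_mem[OF s t]] t])
    finally show "norm (ray_transport_inv s t o\<^sub>L (fan_curvature s t o\<^sub>L ray_transport s t))
        \<le> k * (2 * triangle_area x y z) * t ^ 1" by simp
  qed
  also have "\<dots> = k * triangle_area x y z" using integral_unique[OF power] by simp
  finally show ?thesis .
qed

lemma holonomy_rate_eq_0:
  assumes "triangle_area x y z = 0" "s \<in> {0..1}"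
  shows "holonomy_rate s = 0"
proof -
  have "fan_curvature s t = 0" for t
    unfolding fan_curvature_def using assms(1)
    by (intro curvature_eq_0_if_parallelogram_area_eq_0)
      (simp add: parallelogram_area_scaleR_left parallelogram_area_side_ray)
  then show ?thesis unfolding holonomy_rate_def by simp
qed

lemma norm_holonomy_defect_apply_le_2: "norm (holonomy_defect u) \<le> 2 * norm u"
proof -
  have "norm (holonomy_defect u) \<le> norm (transport \<Gamma> x z u) + norm (transport \<Gamma> x y (transport \<Gamma> y z u))"
    unfolding holonomy_defect_def by (simp add: blinfun.diff_left norm_triangle_ineq4)
  also have "\<dots> = 2 * norm u" using norm_transport xH yH zH by simp
  finally show ?thesis .
qed

lemma norm_holonomy_defect_le_curvature:
  assumes "0 \<le> k" "\<And>p v w. p \<in> H \<Longrightarrow> norm (curvature \<Gamma> DG p v w) \<le> k * (norm v * norm w)"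
  shows "norm holonomy_defect \<le> k * triangle_area x y z"
  by (rule norm_holonomy_defect_le[OF norm_holonomy_rate_le[OF assms]])

lemma holonomy_defect_eq_0: "triangle_area x y z = 0 \<Longrightarrow> holonomy_defect = 0"
  using norm_holonomy_defect_le[of 0] holonomy_rate_eq_0 by auto

lemma holonomy_defect_apply_le_curvature_sup:
  "ereal (norm (holonomy_defect u))
    \<le> ereal (norm u) * min 2 (curvature_sup \<Gamma> DG H * ereal (triangle_area x y z))"
proof -
  let ?A = "triangle_area x y z"
  have "0 \<le> ?A"
    unfolding triangle_area_eq_parallelogram_area using parallelogram_area_nonneg by simp
  consider (finite) k where "curvature_sup \<Gamma> DG H = ereal k" "0 \<le> k"
    | (infinite) "curvature_sup \<Gamma> DG H = \<infinity>"
    using curvature_sup_nonneg[OF xH, of \<Gamma> DG] by (cases "curvature_sup \<Gamma> DG H") auto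
  then show ?thesis
  proof cases
    case finite
    have "norm (holonomy_defect u) \<le> norm u * (k * ?A)"
      using norm_blinfun[of holonomy_defect u] mult_left_mono[OF norm_holonomy_defect_le_curvature, of k "norm u"]
        norm_curvature_le_curvature_sup[OF finite]
      by (simp add: mult.commute finite(2))
    then have "norm (holonomy_defect u) \<le> norm u * min 2 (k * ?A)"
      using norm_holonomy_defect_apply_le_2[of u] by (simp add: min_def mult.commute)
    moreover have "ereal (norm u) * min 2 (curvature_sup \<Gamma> DG H * ereal ?A) = ereal (norm u * min 2 (k * ?A))"
      using finite(1) by (simp add: min_def)
    ultimately show ?thesis by simp
  next
    case infinite
    show ?thesis
    proof (cases "?A = 0")
      case True
      then show ?thesis using infinite holonomy_defect_eq_0 by simp
    next
      case False
      then have "min 2 (curvature_sup \<Gamma> DG H * ereal ?A) = 2"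
        using infinite \<open>0 \<le> ?A\<close> by simp
      then show ?thesis using norm_holonomy_defect_apply_le_2[of u] by simp
    qed
  qed
qed

end

lemma convex_half_space: "convex half_space"
  unfolding convex_def half_space_def by auto

theorem lemma2p7:
  fixes U :: "(real^'n) \<times> real \<Rightarrow> 'f::euclidean_space"
    and DU :: "(real^'n) \<times> real \<Rightarrow> (((real^'n) \<times> real) \<Rightarrow>\<^sub>L 'f)"
    and \<Gamma> :: "(real^'n) \<times> real \<Rightarrow> (((real^'n) \<times> real) \<Rightarrow>\<^sub>L ('f \<Rightarrow>\<^sub>L 'f))"
    and DG :: "(real^'n) \<times> real \<Rightarrow>
                 (((real^'n) \<times> real) \<Rightarrow>\<^sub>L (((real^'n) \<times> real) \<Rightarrow>\<^sub>L ('f \<Rightarrow>\<^sub>L 'f)))"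
    and x y z :: "(real^'n) \<times> real"
  assumes U_deriv: "\<And>p. p \<in> half_space \<Longrightarrow> (U has_derivative blinfun_apply (DU p)) (at p within half_space)"
    and U_cont: "continuous_on half_space DU"
    and G_deriv: "\<And>p. p \<in> half_space \<Longrightarrow> (\<Gamma> has_derivative blinfun_apply (DG p)) (at p within half_space)"
    and G_cont: "continuous_on half_space DG"
    and G_skew: "\<And>p v. p \<in> half_space \<Longrightarrow> skew (\<Gamma> p v)"
    and xH: "x \<in> half_space" and yH: "y \<in> half_space" and zH: "z \<in> half_space"
  shows "ereal (norm (U x - transport \<Gamma> x y (U y)))
    \<le> ereal (norm (U x - transport \<Gamma> x z (U z)) + norm (U y - transport \<Gamma> y z (U z)))
       + ereal (norm (U z)) * min 2 (curvature_sup \<Gamma> DG half_space * ereal (triangle_area x y z))"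
proof -
  interpret T: connection_triangle \<Gamma> DG half_space x y z
    using convex_half_space G_deriv G_cont G_skew xH yH zH by unfold_locales
  let ?D = "T.holonomy_defect (U z)"
  have "norm (U x - transport \<Gamma> x y (U y))
      \<le> norm (U x - transport \<Gamma> x z (U z)) + norm (U y - transport \<Gamma> y z (U z)) + norm ?D"
    unfolding T.holonomy_defect_def by (rule transport_triangle_ineq[OF T.norm_transport[OF xH yH]])
  then have "ereal (norm (U x - transport \<Gamma> x y (U y)))
      \<le> ereal (norm (U x - transport \<Gamma> x z (U z)) + norm (U y - transport \<Gamma> y z (U z))) + ereal (norm ?D)"
    by simp
  also have "\<dots> \<le> ereal (norm (U x - transport \<Gamma> x z (U z)) + norm (U y - transport \<Gamma> y z (U z)))
      + ereal (norm (U z)) * min 2 (curvature_sup \<Gamma> DG half_space * ereal (triangle_area x y z))"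
    by (rule add_left_mono[OF T.holonomy_defect_apply_le_curvature_sup])
  finally show ?thesis .
qed

end
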